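(* Let $a\in C[0,1]$ satisfy $a(0)=0$, $a>0$ on $(0,1]$, and suppose there is $\alpha\in(0,2)$ such that $x\mapsto\frac{x^\alpha}{a(x)}$ is nondecreasing. Let $T>0$ and $Q=(0,T)\times(0,1)$. Then the space $H^1(0,T;L^2_{\frac1a}(0,1))\cap L^2(0,T;H^2_{\frac1a}(0,1))$ is compactly embedded in $C([0,T];L^2_{\frac1a}(0,1))\cap L^2(Q)$.
   Context: $L^2_{\frac1a}(0,1)=\{u\in L^2(0,1):u/\sqrt a\in L^2(0,1)\}$ with norm $\|u\|^2=\int_0^1u^2/a\,dx$; $H^1_{\frac1a}(0,1)=L^2_{\frac1a}(0,1)\cap H^1_0(0,1)$ with norm $\|u\|^2_{L^2_{\frac1a}}+\|u_x\|^2_{L^2}$; $H^2_{\frac1a}(0,1)=\{u\in H^1_{\frac1a}(0,1): au_{xx}\in L^2_{\frac1a}(0,1)\}$ with norm $\|u\|^2_{H^1_{\frac1a}}+\|au_{xx}\|^2_{L^2_{\frac1a}}$. *)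

theory Defs
  imports "HOL-Analysis.Analysis"
begin

definition Qset :: "real \<Rightarrow> (real \<times> real) set" where
  "Qset T = {0<..<T} \<times> {0<..<1}"

definition L2w :: "(real \<Rightarrow> real) \<Rightarrow> (real \<Rightarrow> real) \<Rightarrow> bool" where
  "L2w a f \<longleftrightarrow> set_borel_measurable lborel {0<..<1} f
     \<and> set_integrable lborel {0<..<1} (\<lambda>x. (f x)^2)
     \<and> set_integrable lborel {0<..<1} (\<lambda>x. (f x)^2 / a x)"

definition nL2w :: "(real \<Rightarrow> real) \<Rightarrow> (real \<Rightarrow> real) \<Rightarrow> real" where
  "nL2w a f = (LINT x:{0<..<1}|lborel. (f x)^2 / a x)"

text \<open>f belongs to H^1_{1/a}(0,1) = L^2_{1/a} \<inter> H^1_0, with weak derivative g: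
  f agrees a.e. with x \<mapsto> \<integral>_0^x g, g \<in> L^2, and the trace at 1 vanishes.\<close>
definition H1w :: "(real \<Rightarrow> real) \<Rightarrow> (real \<Rightarrow> real) \<Rightarrow> (real \<Rightarrow> real) \<Rightarrow> bool" where
  "H1w a f g \<longleftrightarrow> L2w a f
     \<and> set_borel_measurable lborel {0<..<1} g
     \<and> set_integrable lborel {0<..<1} g
     \<and> set_integrable lborel {0<..<1} (\<lambda>x. (g x)^2)
     \<and> (LINT x:{0<..<1}|lborel. g x) = 0
     \<and> (AE x in lborel. x \<in> {0<..<1} \<longrightarrow> f x = (LINT y:{0<..<x}|lborel. g y))"

text \<open>f belongs to H^2_{1/a}(0,1), with weak derivative g and (locally integrable)
  weak second derivative h, such that a*h \<in> L^2_{1/a}.\<close>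
definition H2w :: "(real \<Rightarrow> real) \<Rightarrow> (real \<Rightarrow> real) \<Rightarrow> (real \<Rightarrow> real) \<Rightarrow> (real \<Rightarrow> real) \<Rightarrow> bool" where
  "H2w a f g h \<longleftrightarrow> H1w a f g
     \<and> set_borel_measurable lborel {0<..<1} h
     \<and> (\<forall>c d. 0 < c \<longrightarrow> c \<le> d \<longrightarrow> d < 1 \<longrightarrow> set_integrable lborel {c..d} h)
     \<and> (\<exists>k. AE x in lborel. x \<in> {0<..<1} \<longrightarrow>
            g x = k + (LBINT y=ereal (1/2)..ereal x. h y))
     \<and> L2w a (\<lambda>x. a x * h x)"

text \<open>u (with time derivative ut, space derivatives ux, uxx) belongs to
  H^1(0,T;L^2_{1/a}(0,1)) \<inter> L^2(0,T;H^2_{1/a}(0,1)); functions u t x.\<close>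
definition inX :: "(real \<Rightarrow> real) \<Rightarrow> real \<Rightarrow> (real \<Rightarrow> real \<Rightarrow> real) \<Rightarrow> (real \<Rightarrow> real \<Rightarrow> real)
    \<Rightarrow> (real \<Rightarrow> real \<Rightarrow> real) \<Rightarrow> (real \<Rightarrow> real \<Rightarrow> real) \<Rightarrow> bool" where
  "inX a T u ut ux uxx \<longleftrightarrow>
     set_borel_measurable lborel (Qset T) (case_prod u)
   \<and> set_borel_measurable lborel (Qset T) (case_prod ut)
   \<and> set_borel_measurable lborel (Qset T) (case_prod ux)
   \<and> set_borel_measurable lborel (Qset T) (case_prod uxx)
   \<and> (AE t in lborel. t \<in> {0<..<T} \<longrightarrow> H2w a (u t) (ux t) (uxx t))
   \<and> set_integrable lborel (Qset T) (\<lambda>(t,x). (u t x)^2 / a x)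
   \<and> set_integrable lborel (Qset T) (\<lambda>(t,x). (ux t x)^2)
   \<and> set_integrable lborel (Qset T) (\<lambda>(t,x). (a x * uxx t x)^2 / a x)
   \<and> set_integrable lborel (Qset T) (\<lambda>(t,x). (ut t x)^2 / a x)
   \<and> (\<exists>\<xi>. L2w a \<xi> \<and> (AE p in lborel. p \<in> Qset T \<longrightarrow>
          u (fst p) (snd p) = \<xi> (snd p) + (LINT s:{0<..<fst p}|lborel. ut s (snd p))))"

text \<open>Squared norm in H^1(0,T;L^2_{1/a}) \<inter> L^2(0,T;H^2_{1/a}) (an equivalent norm).\<close>
definition normX2 :: "(real \<Rightarrow> real) \<Rightarrow> real \<Rightarrow> (real \<Rightarrow> real \<Rightarrow> real) \<Rightarrow> (real \<Rightarrow> real \<Rightarrow> real)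
    \<Rightarrow> (real \<Rightarrow> real \<Rightarrow> real) \<Rightarrow> (real \<Rightarrow> real \<Rightarrow> real) \<Rightarrow> real" where
  "normX2 a T u ut ux uxx = (LINT p:Qset T|lborel.
      (case p of (t,x) \<Rightarrow> (u t x)^2 / a x + (ux t x)^2 + (a x * uxx t x)^2 / a x
                       + (ut t x)^2 / a x))"

text \<open>v is a (jointly measurable) element of C([0,T];L^2_{1/a}(0,1)) \<inter> L^2(Q).\<close>
definition inY :: "(real \<Rightarrow> real) \<Rightarrow> real \<Rightarrow> (real \<Rightarrow> real \<Rightarrow> real) \<Rightarrow> bool" where
  "inY a T v \<longleftrightarrow> (\<forall>t\<in>{0..T}. L2w a (v t))
     \<and> (\<forall>t0\<in>{0..T}. ((\<lambda>t. nL2w a (\<lambda>x. v t x - v t0 x)) \<longlongrightarrow> 0) (at t0 within {0..T}))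
     \<and> set_borel_measurable lborel (Qset T) (case_prod v)
     \<and> set_integrable lborel (Qset T) (\<lambda>(t,x). (v t x)^2)"

end

theory Submission
  imports Defs "HOL-Library.Diagonal_Subsequence"
begin

text \<open>Write X and Y for the two spaces of the theorem (the predicates inX and inY). An element u
  of X is, up to a null set, the time primitive u(t) = xi + int_0^t u_t. By Cauchy-Schwarz in time,
  |u(t) - u(s)|^2 <= |t - s| * int_Q u_t^2/a in the squared norm of L^2_{1/a}; this gives the
  embedding and makes bounded sequences equicontinuous. For compactness, Chebyshev's inequality
  picks in each of m subintervals of [0,T] a time s at which u(s) is the primitive of a function
  with int u_x(s)^2 <= (C + 1) m / T, so u(s) is Hoelder continuous of exponent 1/2 and vanishes
  at 0. Such functions are small in L^2_{1/a} as soon as they are small on a fine grid: near 0 the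
  bound f(x)^2 <= beta x together with a(x) >= a(1) x^alpha, alpha < 2, makes f^2/a uniformly
  integrable. A diagonal subsequence makes all grid values converge; the resulting subsequence is
  uniformly Cauchy in C([0,T]; L^2_{1/a}), its limit is built pointwise along a fast Cauchy
  subsequence, and convergence in L^2(Q) follows from f^2 <= (sup a) f^2/a.\<close>

lemma set_borel_measurable_iff_restrict_space:
  fixes f :: "'a \<Rightarrow> real"
  assumes "A \<in> sets M"
  shows "set_borel_measurable M A f \<longleftrightarrow> f \<in> borel_measurable (restrict_space M A)"
  using assms by (simp add: set_borel_measurable_def borel_measurable_restrict_space_iff)

lemma set_borel_measurable_compose2:
  fixes f g :: "'a \<Rightarrow> real" and h :: "real \<Rightarrow> real \<Rightarrow> real"
  assumes h: "(\<lambda>p. h (fst p) (snd p)) \<in> borel_measurable (borel \<Otimes>\<^sub>M borel)" and A: "A \<in> sets M"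
    and f: "set_borel_measurable M A f" and g: "set_borel_measurable M A g"
  shows "set_borel_measurable M A (\<lambda>x. h (f x) (g x))"
proof -
  have "(\<lambda>x. (f x, g x)) \<in> restrict_space M A \<rightarrow>\<^sub>M borel \<Otimes>\<^sub>M borel"
    using f g A by (simp add: set_borel_measurable_iff_restrict_space)
  from measurable_compose[OF this h] show ?thesis
    using A by (simp add: set_borel_measurable_iff_restrict_space)
qed

lemma set_borel_measurable_add:
  "A \<in> sets M \<Longrightarrow> set_borel_measurable M A f \<Longrightarrow> set_borel_measurable M A g
    \<Longrightarrow> set_borel_measurable M A (\<lambda>x. f x + g x :: real)"
  by (rule set_borel_measurable_compose2[where h = "(+)"]) (measurable, auto)

lemma set_borel_measurable_diff:
  "A \<in> sets M \<Longrightarrow> set_borel_measurable M A f \<Longrightarrow> set_borel_measurable M A g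
    \<Longrightarrow> set_borel_measurable M A (\<lambda>x. f x - g x :: real)"
  by (rule set_borel_measurable_compose2[where h = "(-)"]) (measurable, auto)

lemma set_borel_measurable_square_divide:
  "A \<in> sets M \<Longrightarrow> set_borel_measurable M A f \<Longrightarrow> set_borel_measurable M A g
    \<Longrightarrow> set_borel_measurable M A (\<lambda>x. (f x)^2 / g x :: real)"
  by (rule set_borel_measurable_compose2[where h = "\<lambda>y z. y^2 / z"]) (measurable, auto)

lemma set_borel_measurable_square:
  "A \<in> sets M \<Longrightarrow> set_borel_measurable M A f \<Longrightarrow> set_borel_measurable M A (\<lambda>x. (f x)^2 :: real)"
  by (rule set_borel_measurable_compose2[where h = "\<lambda>y z. y^2" and g = f]) (measurable, auto)

lemma set_borel_measurable_lim:
  fixes f :: "nat \<Rightarrow> 'a \<Rightarrow> real"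
  assumes "\<And>n. set_borel_measurable M A (f n)"
  shows "set_borel_measurable M A (\<lambda>x. lim (\<lambda>n. f n x))"
proof -
  have "(\<lambda>x. lim (\<lambda>n. indicator A x *\<^sub>R f n x)) \<in> borel_measurable M"
    using assms by (intro borel_measurable_lim_metric) (simp add: set_borel_measurable_def)
  also have "(\<lambda>x. lim (\<lambda>n. indicator A x *\<^sub>R f n x)) = (\<lambda>x. indicator A x *\<^sub>R lim (\<lambda>n. f n x))"
    by (auto simp: indicator_def lim_const)
  finally show ?thesis
    by (simp add: set_borel_measurable_def)
qed

lemma set_integrable_square_if_diff:
  fixes f g :: "'a \<Rightarrow> real"
  assumes A: "A \<in> sets M" and f: "set_integrable M A (\<lambda>x. (f x)^2)"
    and diff: "set_integrable M A (\<lambda>x. (f x - g x)^2)" and g: "set_borel_measurable M A g"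
  shows "set_integrable M A (\<lambda>x. (g x)^2)"
proof (rule set_integrable_bound)
  show "set_integrable M A (\<lambda>x. 2 * (f x)^2 + 2 * (f x - g x)^2)"
    using f diff by (intro set_integral_add set_integrable_mult_right)
  show "set_borel_measurable M A (\<lambda>x. (g x)^2)"
    by (rule set_borel_measurable_square[OF A g])
  have "(g x)^2 \<le> 2 * (f x)^2 + 2 * (f x - g x)^2" for x
    using zero_le_power2[of "2 * f x - g x"] by (simp add: power2_eq_square algebra_simps)
  then show "AE x in M. x \<in> A \<longrightarrow> norm ((g x)^2) \<le> norm (2 * (f x)^2 + 2 * (f x - g x)^2)"
    by (intro AE_I2) (simp add: add_nonneg_nonneg)
qed

lemma set_integral_mono_set:
  fixes f :: "'a \<Rightarrow> real"
  assumes f: "set_integrable M B f" and A: "A \<in> sets M" "A \<subseteq> B"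
    and nonneg: "\<And>x. x \<in> B \<Longrightarrow> 0 \<le> f x"
  shows "(LINT x:A|M. f x) \<le> (LINT x:B|M. f x)"
  unfolding set_lebesgue_integral_def
proof (rule integral_mono)
  show "integrable M (\<lambda>x. indicator A x *\<^sub>R f x)"
    using set_integrable_subset[OF f A] by (simp add: set_integrable_def)
  show "integrable M (\<lambda>x. indicator B x *\<^sub>R f x)"
    using f by (simp add: set_integrable_def)
  show "indicator A x *\<^sub>R f x \<le> indicator B x *\<^sub>R f x" for x
    using A(2) nonneg[of x] by (auto simp: indicator_def)
qed

lemma set_integral_square_le:
  fixes f :: "'a \<Rightarrow> real"
  assumes S: "S \<in> sets M" "emeasure M S < \<infinity>"
    and f: "set_borel_measurable M S f" "set_integrable M S (\<lambda>x. (f x)^2)"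
  shows "set_integrable M S f"
    and "(LINT x:S|M. f x)^2 \<le> measure M S * (LINT x:S|M. (f x)^2)"
proof -
  have one: "set_integrable M S (\<lambda>_. 1::real)"
    using S by (simp add: set_integrable_def integrable_real_indicator)
  have "set_integrable M S (\<lambda>x. 1 + (f x)^2)"
    using one f(2) by (rule set_integral_add)
  then show fi: "set_integrable M S f"
  proof (rule set_integrable_bound[OF _ f(1)], intro AE_I2 impI)
    fix x
    have "0 \<le> (\<bar>f x\<bar> - 1)^2" by simp
    then show "norm (f x) \<le> norm (1 + (f x)^2)"
      by (simp add: power2_eq_square algebra_simps)
  qed
  define \<mu> where "\<mu> = measure M S"
  show "(LINT x:S|M. f x)^2 \<le> \<mu> * (LINT x:S|M. (f x)^2)"
  proof (cases "\<mu> = 0")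
    case True
    then have "S \<in> null_sets M"
      using S by (intro null_setsI) (simp_all add: \<mu>_def emeasure_eq_ennreal_measure less_top[symmetric])
    then have "AE x in M. indicator S x *\<^sub>R f x = 0"
      by (rule AE_mp[OF AE_not_in]) (simp add: indicator_def)
    then have "(LINT x:S|M. f x) = 0"
      unfolding set_lebesgue_integral_def by (simp add: integral_eq_zero_AE)
    then show ?thesis using True by simp
  next
    case False
    then have \<mu>_pos: "0 < \<mu>" by (simp add: \<mu>_def order_less_le)
    define m where "m = (LINT x:S|M. f x) / \<mu>"
    have "0 \<le> (LINT x:S|M. (f x - m)^2)"
      unfolding set_lebesgue_integral_def by (rule integral_nonneg_AE) auto
    also have "(LINT x:S|M. (f x - m)^2) = (LINT x:S|M. (f x)^2 - 2 * m * f x) + (LINT x:S|M. m^2)"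
    proof -
      have "(\<lambda>x. (f x - m)^2) = (\<lambda>x. ((f x)^2 - 2 * m * f x) + m^2)"
        by (simp add: fun_eq_iff power2_eq_square algebra_simps)
      moreover have "set_integrable M S (\<lambda>_. m^2)"
        using set_integrable_mult_left[OF one, of "m^2"] by simp
      ultimately show ?thesis
        using f(2) fi by (simp add: set_integral_add)
    qed
    also have "\<dots> = (LINT x:S|M. (f x)^2) - 2 * m * (LINT x:S|M. f x) + m^2 * \<mu>"
      using f(2) fi S by (simp add: set_integral_diff set_integral_const less_top \<mu>_def)
    also have "\<dots> = (LINT x:S|M. (f x)^2) - (LINT x:S|M. f x)^2 / \<mu>"
      using \<mu>_pos by (simp add: m_def power2_eq_square field_simps)
    finally show ?thesis using \<mu>_pos by (simp add: field_simps)
  qed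
qed

lemma primitive_diff_square_le:
  fixes g :: "real \<Rightarrow> real"
  assumes g: "set_borel_measurable lborel {0<..<L} g" "set_integrable lborel {0<..<L} (\<lambda>z. (g z)^2)"
    and xy: "x \<in> {0..L}" "y \<in> {0..L}"
  shows "((LINT z:{0<..<x}|lborel. g z) - (LINT z:{0<..<y}|lborel. g z))^2
      \<le> \<bar>x - y\<bar> * (LINT z:{0<..<L}|lborel. (g z)^2)"
proof -
  have g_int: "set_integrable lborel {0<..<L} g"
    using set_integral_square_le(1)[OF _ emeasure_bounded_finite g] by simp
  have *: "((LINT z:{0<..<x}|lborel. g z) - (LINT z:{0<..<y}|lborel. g z))^2
      \<le> (x - y) * (LINT z:{0<..<L}|lborel. (g z)^2)"
    if xy: "x \<in> {0..L}" "y \<in> {0..L}" and yx: "y \<le> x" for x y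
  proof -
    define D where "D = {0<..<x} - {0<..<y}"
    have D: "D \<in> sets lborel" "D \<subseteq> {0<..<L}" "D \<subseteq> {y..x}"
      using xy yx by (auto simp: D_def)
    have D_finite: "emeasure lborel D < \<infinity>"
      using bounded_subset[OF bounded_closed_interval D(3)] by (rule emeasure_bounded_finite)
    have "measure lborel D \<le> measure lborel {y..x}"
      using D yx by (intro measure_mono_fmeasurable) (auto simp: fmeasurable_def)
    then have measure_D: "measure lborel D \<le> x - y"
      using yx by simp
    have "(LINT z:{0<..<x}|lborel. g z) = (LINT z:{0<..<y}|lborel. g z) + (LINT z:D|lborel. g z)"
    proof -
      have "{0<..<x} = {0<..<y} \<union> D"
        using yx by (auto simp: D_def)
      moreover have "(LINT z:{0<..<y} \<union> D|lborel. g z) = (LINT z:{0<..<y}|lborel. g z) + (LINT z:D|lborel. g z)"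
      proof (rule set_integral_Un)
        show "set_integrable lborel {0<..<y} g"
          by (rule set_integrable_subset[OF g_int]) (use xy in auto)
        show "set_integrable lborel D g"
          by (rule set_integrable_subset[OF g_int D(1,2)])
      qed (auto simp: D_def)
      ultimately show ?thesis
        by simp
    qed
    then have "((LINT z:{0<..<x}|lborel. g z) - (LINT z:{0<..<y}|lborel. g z))^2
        = (LINT z:D|lborel. g z)^2"
      by simp
    also have "\<dots> \<le> measure lborel D * (LINT z:D|lborel. (g z)^2)"
      by (rule set_integral_square_le(2)[OF D(1) D_finite set_borel_measurable_subset[OF g(1) D(1,2)]
            set_integrable_subset[OF g(2) D(1,2)]])
    also have "\<dots> \<le> (x - y) * (LINT z:{0<..<L}|lborel. (g z)^2)"
      using measure_D yx
      by (intro mult_mono set_integral_mono_set[OF g(2) D(1,2)])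
         (auto intro!: integral_nonneg_AE simp: set_lebesgue_integral_def)
    finally show ?thesis .
  qed
  show ?thesis
  proof (cases "y \<le> x")
    case True
    then show ?thesis using *[OF xy] by simp
  next
    case False
    then show ?thesis using *[OF xy(2,1)] by (simp add: power2_commute)
  qed
qed

lemma set_integrable_powr_0_1:
  assumes "-1 < b"
  shows "set_integrable lborel {0<..<1} (\<lambda>x::real. x powr b)"
proof -
  have "(\<lambda>x::real. x powr b) absolutely_integrable_on {0<..1}"
    using integrable_on_powr_from_0'[OF assms, of 1] by (intro nonnegative_absolutely_integrable_1) auto
  then have "set_integrable lborel {0<..1} (\<lambda>x::real. x powr b)"
    by (simp add: set_integrable_def integrable_completion[symmetric])
  then show ?thesis
    by (rule set_integrable_subset) auto
qed

lemma AE_imp_ex_in_interval: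
  assumes "AE t in lborel. Q t" and "a < (b::real)"
  obtains t where "t \<in> {a<..<b}" and "Q t"
proof -
  obtain N where N: "{t \<in> space lborel. \<not> Q t} \<subseteq> N" "emeasure lborel N = 0" "N \<in> sets lborel"
    using assms(1) by (rule AE_E)
  have "\<not> {a<..<b} \<subseteq> N"
  proof
    assume "{a<..<b} \<subseteq> N"
    then have "emeasure lborel {a<..<b} \<le> emeasure lborel N"
      using N(3) by (rule emeasure_mono)
    then show False
      using assms(2) N(2) by simp
  qed
  then obtain t where "t \<in> {a<..<b}" "t \<notin> N"
    by blast
  then show ?thesis
    using N(1) that by auto
qed

lemma ex_below_average:
  fixes E :: "real \<Rightarrow> ennreal" and C :: real
  assumes Q: "AE s in lborel. s \<in> I \<longrightarrow> Q s"
    and I: "I \<in> sets lborel" "emeasure lborel I = ennreal len" "0 < len"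
    and E: "(\<integral>\<^sup>+s\<in>I. E s \<partial>lborel) \<le> ennreal C" and C: "0 \<le> C"
  obtains s where "s \<in> I" "Q s" "E s \<le> ennreal ((C + 1) / len)"
proof -
  have "\<exists>s\<in>I. Q s \<and> E s \<le> ennreal ((C + 1) / len)"
  proof (rule ccontr)
    assume no_good: "\<not> ?thesis"
    have "AE s in lborel. ennreal ((C + 1) / len) * indicator I s \<le> E s * indicator I s"
      using Q by eventually_elim (use no_good in \<open>auto simp: indicator_def\<close>)
    then have "ennreal ((C + 1) / len) * emeasure lborel I \<le> (\<integral>\<^sup>+s\<in>I. E s \<partial>lborel)"
      using I(1) by (auto simp: nn_integral_cmult_indicator[symmetric] intro!: nn_integral_mono_AE)
    also have "ennreal ((C + 1) / len) * emeasure lborel I = ennreal (C + 1)"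
      using I(2,3) C by (simp add: ennreal_mult[symmetric])
    also note E
    finally have "C + 1 \<le> C"
      using C by (simp only: ennreal_le_iff)
    then show False
      by simp
  qed
  then show ?thesis
    using that by blast
qed

lemma Qset_sets: "Qset T \<in> sets lborel"
  by (simp add: Qset_def borel_open open_Times)

lemma AE_Qset_slices:
  assumes "AE p in lborel. p \<in> Qset T \<longrightarrow> P (fst p) (snd p)"
  shows "AE s in lborel. AE x in lborel. (s, x) \<in> Qset T \<longrightarrow> P s x"
  using lborel_pair.AE_pair[of "\<lambda>p. p \<in> Qset T \<longrightarrow> P (fst p) (snd p)"] assms
  unfolding lborel_prod by simp

lemma set_integral_rectangle_le:
  fixes h :: "real \<times> real \<Rightarrow> real"
  assumes sets: "A \<in> sets lborel" "S \<in> sets lborel" and A_finite: "emeasure lborel A < \<infinity>"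
    and h_meas: "set_borel_measurable lborel (A \<times> S) h"
    and h_nonneg: "\<And>t x. t \<in> A \<Longrightarrow> x \<in> S \<Longrightarrow> 0 \<le> h (t, x)"
    and slice_int: "\<And>t. t \<in> A \<Longrightarrow> set_integrable lborel S (\<lambda>x. h (t, x))"
    and slice_le: "\<And>t. t \<in> A \<Longrightarrow> (LINT x:S|lborel. h (t, x)) \<le> B" and B: "0 \<le> B"
  shows "set_integrable lborel (A \<times> S) h"
    and "(LINT p:A \<times> S|lborel. h p) \<le> measure lborel A * B"
proof -
  define H where "H p = indicator (A \<times> S) p * h p" for p
  have H_nonneg: "0 \<le> H p" for p
    using h_nonneg by (auto simp: H_def indicator_def)
  have H_meas: "H \<in> borel_measurable (lborel \<Otimes>\<^sub>M lborel)"
    using h_meas unfolding H_def[abs_def] by (simp add: set_borel_measurable_def lborel_prod)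
  have slice: "(\<integral>\<^sup>+x. ennreal (H (t, x)) \<partial>lborel) \<le> ennreal B * indicator A t" for t
  proof (cases "t \<in> A")
    case True
    have eq: "H (t, x) = indicator S x *\<^sub>R h (t, x)" for x
      using True by (auto simp: H_def indicator_def)
    have "(\<integral>\<^sup>+x. ennreal (H (t, x)) \<partial>lborel) = ennreal (LINT x:S|lborel. h (t, x))"
      unfolding eq set_lebesgue_integral_def
    proof (rule nn_integral_eq_integral)
      show "integrable lborel (\<lambda>x. indicator S x *\<^sub>R h (t, x))"
        using slice_int[OF True] by (simp add: set_integrable_def)
      show "AE x in lborel. 0 \<le> indicator S x *\<^sub>R h (t, x)"
        using H_nonneg[of "(t, _)"] by (intro AE_I2) (simp add: eq)
    qed
    then show ?thesis
      using True slice_le[OF True] by (simp add: ennreal_leI)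
  qed (simp add: H_def)
  have "(\<integral>\<^sup>+p. ennreal (H p) \<partial>lborel) = (\<integral>\<^sup>+t. \<integral>\<^sup>+x. ennreal (H (t, x)) \<partial>lborel \<partial>lborel)"
    using lborel.nn_integral_fst[of "\<lambda>p. ennreal (H p)" lborel] H_meas by (simp add: lborel_prod)
  also have "\<dots> \<le> (\<integral>\<^sup>+t. ennreal B * indicator A t \<partial>lborel)"
    by (rule nn_integral_mono) (rule slice)
  also have "\<dots> = ennreal (measure lborel A * B)"
    using sets A_finite B
    by (simp add: nn_integral_cmult_indicator emeasure_eq_ennreal_measure less_top ennreal_mult' mult.commute)
  finally have finite: "(\<integral>\<^sup>+p. ennreal (H p) \<partial>lborel) \<le> ennreal (measure lborel A * B)" .
  have "integrable lborel H"
    using H_meas finite H_nonneg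
    by (intro integrableI_bounded) (auto simp: lborel_prod[symmetric] top.not_eq_extremum le_less_trans)
  then show "set_integrable lborel (A \<times> S) h"
    by (simp add: set_integrable_def H_def[abs_def])
  have "(LINT p:A \<times> S|lborel. h p) = enn2real (\<integral>\<^sup>+p. ennreal (H p) \<partial>lborel)"
    unfolding set_lebesgue_integral_def using H_meas H_nonneg
    by (subst integral_eq_nn_integral) (auto simp: H_def[abs_def] lborel_prod[symmetric])
  also have "\<dots> \<le> measure lborel A * B"
    using finite B by (simp add: enn2real_leI)
  finally show "(LINT p:A \<times> S|lborel. h p) \<le> measure lborel A * B" .
qed

lemma min_power_integral_tendsto_0:
  fixes \<beta> c \<alpha> :: real
  assumes \<beta>: "0 \<le> \<beta>" and c: "0 < c" and \<alpha>: "\<alpha> < 2"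
  shows "set_integrable lborel {0<..<1} (\<lambda>x. min (\<beta> * x) (inverse (real (Suc n))) / (c * x powr \<alpha>))"
    and "(\<lambda>n. LINT x:{0<..<1}|lborel. min (\<beta> * x) (inverse (real (Suc n))) / (c * x powr \<alpha>)) \<longlonglongrightarrow> 0"
proof -
  define \<phi> where "\<phi> n x = indicator {0<..<1} x *\<^sub>R (min (\<beta> * x) (inverse (real (Suc n))) / (c * x powr \<alpha>))"
    for n x
  define w where "w x = \<beta> / c * (indicator {0<..<1} x *\<^sub>R x powr (1 - \<alpha>))" for x
  have \<phi>_meas: "\<phi> n \<in> borel_measurable lborel" for n
    unfolding \<phi>_def by measurable
  have w_int: "integrable lborel w"
    using set_integrable_powr_0_1[of "1 - \<alpha>"] \<alpha>
    unfolding w_def set_integrable_def by (intro integrable_mult_right) simp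
  have \<phi>_le_w: "AE x in lborel. norm (\<phi> n x) \<le> w x" for n
  proof (intro AE_I2)
    fix x :: real
    show "norm (\<phi> n x) \<le> w x"
    proof (cases "x \<in> {0<..<1}")
      case True
      have "min (\<beta> * x) (inverse (real (Suc n))) / (c * x powr \<alpha>) \<le> \<beta> * x / (c * x powr \<alpha>)"
        using True c by (intro divide_right_mono) auto
      also have "\<dots> = \<beta> / c * x powr (1 - \<alpha>)"
        using True by (simp add: powr_diff)
      finally show ?thesis
        using True \<beta> c by (simp add: \<phi>_def w_def)
    qed (simp add: \<phi>_def w_def)
  qed
  have \<phi>_lim: "AE x in lborel. (\<lambda>n. \<phi> n x) \<longlonglongrightarrow> 0"
  proof (intro AE_I2)
    fix x :: real
    show "(\<lambda>n. \<phi> n x) \<longlonglongrightarrow> 0"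
    proof (cases "x \<in> {0<..<1}")
      case True
      have "(\<lambda>n. min (\<beta> * x) (inverse (real (Suc n)))) \<longlonglongrightarrow> min (\<beta> * x) 0"
        by (intro tendsto_min tendsto_const LIMSEQ_inverse_real_of_nat)
      then have "(\<lambda>n. min (\<beta> * x) (inverse (real (Suc n))) / (c * x powr \<alpha>)) \<longlonglongrightarrow> 0"
        using True \<beta> by (intro tendsto_divide_zero) simp
      then show ?thesis
        using True by (simp add: \<phi>_def)
    qed (simp add: \<phi>_def)
  qed
  show "set_integrable lborel {0<..<1} (\<lambda>x. min (\<beta> * x) (inverse (real (Suc n))) / (c * x powr \<alpha>))"
    using integrable_dominated_convergence2[of "\<lambda>x. 0" lborel \<phi> w] \<phi>_meas w_int \<phi>_le_w \<phi>_lim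
    by (simp add: set_integrable_def \<phi>_def[abs_def])
  show "(\<lambda>n. LINT x:{0<..<1}|lborel. min (\<beta> * x) (inverse (real (Suc n))) / (c * x powr \<alpha>)) \<longlonglongrightarrow> 0"
    using integral_dominated_convergence[of "\<lambda>x. 0" lborel \<phi> w] \<phi>_meas w_int \<phi>_le_w \<phi>_lim
    by (simp add: set_lebesgue_integral_def \<phi>_def[abs_def])
qed

lemma bounded_seqs_common_convergent_subseq:
  fixes X :: "nat \<Rightarrow> 'i::countable \<Rightarrow> real"
  assumes bounded: "\<And>i. \<exists>B. \<forall>n. \<bar>X n i\<bar> \<le> B"
  obtains r where "strict_mono r" and "\<And>i. convergent (\<lambda>n. X (r n) i)"
proof -
  define P where "P k s \<longleftrightarrow> convergent (\<lambda>n. X (s n) (from_nat k))" for k and s :: "nat \<Rightarrow> nat"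
  interpret subseqs P
  proof
    fix k and s :: "nat \<Rightarrow> nat"
    obtain B where "\<forall>n. \<bar>X n (from_nat k)\<bar> \<le> B"
      using bounded by blast
    then have "bounded (range (\<lambda>n. X (s n) (from_nat k)))"
      unfolding bounded_iff by auto
    then obtain l r where "strict_mono r" "((\<lambda>n. X (s n) (from_nat k)) \<circ> r) \<longlonglongrightarrow> l"
      using bounded_imp_convergent_subsequence by blast
    then show "\<exists>r. strict_mono r \<and> P k (s \<circ> r)"
      by (auto simp: P_def convergent_def o_def)
  qed
  have "P k (diagseq \<circ> (+) (Suc k))" for k
  proof (rule diagseq_holds)
    fix r s :: "nat \<Rightarrow> nat" and n
    assume "strict_mono r" "P n s"
    then show "P n (s \<circ> r)"
      by (auto simp: P_def convergent_def o_def intro: LIMSEQ_subseq_LIMSEQ[unfolded o_def])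
  qed
  then have "convergent (\<lambda>n. X (diagseq n) (from_nat k))" for k
  proof -
    from \<open>P k (diagseq \<circ> (+) (Suc k))\<close> obtain l
      where "(\<lambda>n. X (diagseq (n + Suc k)) (from_nat k)) \<longlonglongrightarrow> l"
      by (auto simp: P_def convergent_def o_def add.commute)
    then show ?thesis
      unfolding convergent_def by (blast intro: LIMSEQ_offset)
  qed
  then show ?thesis
    using that[OF subseq_diagseq] by (metis from_nat_to_nat)
qed

lemma convergent_if_summable_weighted_diff_squares:
  fixes f :: "nat \<Rightarrow> real"
  assumes summable: "summable (\<lambda>j. 2^j * ((f (Suc j) - f j)^2 / c))" and c: "0 < c"
  shows "convergent f"
proof -
  have "(\<lambda>j. 2^j * ((f (Suc j) - f j)^2 / c)) \<longlonglongrightarrow> 0"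
    using summable by (rule summable_LIMSEQ_zero)
  then have "eventually (\<lambda>j. 2^j * ((f (Suc j) - f j)^2 / c) < 1) sequentially"
    by (rule order_tendstoD) simp
  then have "eventually (\<lambda>j. norm (f (Suc j) - f j) \<le> sqrt c * sqrt (1/2) ^ j) sequentially"
  proof eventually_elim
    case (elim j)
    then have "(f (Suc j) - f j)^2 \<le> c * (1/2)^j"
      using c by (simp add: field_simps)
    then show ?case
      by (metis real_le_rsqrt real_norm_def power2_abs real_sqrt_mult real_sqrt_power)
  qed
  moreover have "summable (\<lambda>j. sqrt c * sqrt (1/2) ^ j)"
    by (intro summable_mult summable_geometric) simp
  ultimately have "summable (\<lambda>j. f (Suc j) - f j)"
    by (rule summable_comparison_test_ev)
  then show "convergent f"
    using sum_lessThan_telescope[of f] by (simp add: summable_iff_convergent convergent_diff_const_right_iff)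
qed

lemma convergent_finite_family_eventually_close:
  fixes X :: "nat \<Rightarrow> 'i \<Rightarrow> real"
  assumes A: "finite A" and conv: "\<And>i. i \<in> A \<Longrightarrow> convergent (\<lambda>n. X n i)" and \<epsilon>: "0 < \<epsilon>"
  obtains N where "\<And>n p i. N \<le> n \<Longrightarrow> N \<le> p \<Longrightarrow> i \<in> A \<Longrightarrow> \<bar>X n i - X p i\<bar> < \<epsilon>"
proof -
  have "eventually (\<lambda>n. \<forall>i\<in>A. \<bar>X n i - lim (\<lambda>n. X n i)\<bar> < \<epsilon> / 2) sequentially"
  proof (intro eventually_ball_finite[OF A] ballI)
    fix i assume "i \<in> A"
    then have "(\<lambda>n. X n i) \<longlonglongrightarrow> lim (\<lambda>n. X n i)"
      using conv by (simp add: convergent_LIMSEQ_iff)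
    then show "eventually (\<lambda>n. \<bar>X n i - lim (\<lambda>n. X n i)\<bar> < \<epsilon> / 2) sequentially"
      using \<epsilon> by (auto dest: tendstoD[of _ _ _ "\<epsilon> / 2"] simp: dist_real_def)
  qed
  then obtain N where "\<And>n i. N \<le> n \<Longrightarrow> i \<in> A \<Longrightarrow> \<bar>X n i - lim (\<lambda>n. X n i)\<bar> < \<epsilon> / 2"
    by (auto simp: eventually_sequentially)
  then have "\<bar>X n i - X p i\<bar> < \<epsilon>" if "N \<le> n" "N \<le> p" "i \<in> A" for n p i
    using that by (smt (verit) field_sum_of_halves)
  with that show ?thesis
    by blast
qed

lemma ex_subinterval_index:
  fixes t T :: real and m :: nat
  assumes "0 < m" "0 < T" "t \<in> {0..T}"
  obtains i where "i < m" "real i * T / real m \<le> t" "t \<le> (real i + 1) * T / real m"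
proof -
  define q where "q = t * real m / T"
  have q: "0 \<le> q" "q \<le> real m"
    using assms by (auto simp: q_def field_simps)
  define i where "i = min (m - 1) (nat \<lfloor>q\<rfloor>)"
  have "i < m" "real i \<le> q" "q \<le> real i + 1"
    using assms(1) q by (auto simp: i_def min_def not_le) linarith+
  moreover have "t = q * T / real m"
    using assms by (simp add: q_def)
  ultimately show ?thesis
    using assms that by (auto simp: divide_right_mono mult_right_mono)
qed

lemma subinterval_bounds:
  fixes T :: real and i m :: nat
  assumes "i < m" "0 < T"
  shows "0 \<le> real i * T / real m" and "real i * T / real m < (real i + 1) * T / real m"
    and "(real i + 1) * T / real m \<le> T" and "(real i + 1) * T / real m - real i * T / real m = T / real m"
proof -
  have "(real i + 1) * T \<le> real m * T"
    using assms by (intro mult_right_mono) auto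
  then show "0 \<le> real i * T / real m" "real i * T / real m < (real i + 1) * T / real m"
    "(real i + 1) * T / real m \<le> T" "(real i + 1) * T / real m - real i * T / real m = T / real m"
    using assms by (auto simp: field_simps)
qed

section \<open>Hoelder continuity of exponent 1/2\<close>

definition half_holder_on :: "real \<Rightarrow> real set \<Rightarrow> (real \<Rightarrow> real) \<Rightarrow> bool" where
  "half_holder_on \<beta> S f \<longleftrightarrow> (\<forall>x\<in>S. \<forall>y\<in>S. (f x - f y)^2 \<le> \<beta> * \<bar>x - y\<bar>)"

lemma half_holder_onD:
  "half_holder_on \<beta> S f \<Longrightarrow> x \<in> S \<Longrightarrow> y \<in> S \<Longrightarrow> (f x - f y)^2 \<le> \<beta> * \<bar>x - y\<bar>"
  by (simp add: half_holder_on_def)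

lemma half_holder_on_mono:
  assumes "half_holder_on \<beta> S f" "\<beta> \<le> \<beta>'"
  shows "half_holder_on \<beta>' S f"
  using assms unfolding half_holder_on_def by (meson abs_ge_zero mult_right_mono order_trans)

lemma half_holder_on_imp_continuous_on:
  assumes "half_holder_on \<beta> S f"
  shows "continuous_on S f"
  unfolding continuous_on_def
proof
  fix x assume x: "x \<in> S"
  have "((\<lambda>y. sqrt (\<beta> * \<bar>y - x\<bar>)) \<longlongrightarrow> sqrt (\<beta> * \<bar>x - x\<bar>)) (at x within S)"
    by (intro tendsto_intros)
  then have "((\<lambda>y. sqrt (\<beta> * \<bar>y - x\<bar>)) \<longlongrightarrow> 0) (at x within S)"
    by simp
  moreover have "\<forall>\<^sub>F y in at x within S. norm (f y - f x) \<le> sqrt (\<beta> * \<bar>y - x\<bar>)"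
    using half_holder_onD[OF assms _ x]
    by (auto simp: eventually_at_filter intro!: always_eventually real_le_rsqrt)
  ultimately have "((\<lambda>y. f y - f x) \<longlongrightarrow> 0) (at x within S)"
    by (rule Lim_null_comparison[rotated])
  then show "(f \<longlongrightarrow> f x) (at x within S)"
    by (simp add: LIM_zero_iff)
qed

lemma half_holder_on_set_borel_measurable:
  assumes "half_holder_on \<beta> {0..1} g"
  shows "set_borel_measurable lborel {0<..<1} g"
proof -
  have "continuous_on {0<..<1} g"
    using half_holder_on_imp_continuous_on[OF assms] by (rule continuous_on_subset) auto
  then show ?thesis
    using set_measurable_continuous_on[of "{0<..<1}" g] by (simp add: set_borel_measurable_def)
qed

lemma half_holder_on_diff:
  assumes "half_holder_on \<beta> S f" "half_holder_on \<beta> S g"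
  shows "half_holder_on (4 * \<beta>) S (\<lambda>x. f x - g x)"
  unfolding half_holder_on_def
proof (intro ballI)
  fix x y assume xy: "x \<in> S" "y \<in> S"
  have "(f x - g x - (f y - g y))^2 \<le> 2 * (f x - f y)^2 + 2 * (g x - g y)^2"
    using sum_squares_ge_zero[of "f x - f y + (g x - g y)" 0]
    by (simp add: power2_eq_square algebra_simps)
  also have "\<dots> \<le> 2 * (\<beta> * \<bar>x - y\<bar>) + 2 * (\<beta> * \<bar>x - y\<bar>)"
    using half_holder_onD[OF assms(1) xy] half_holder_onD[OF assms(2) xy] by linarith
  finally show "(f x - g x - (f y - g y))^2 \<le> 4 * \<beta> * \<bar>x - y\<bar>"
    by simp
qed

lemma half_holder_on_square_le:
  assumes "half_holder_on \<beta> S f" "0 \<in> S" "f 0 = 0" "x \<in> S" "0 \<le> x"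
  shows "(f x)^2 \<le> \<beta> * x"
  using half_holder_onD[OF assms(1) assms(4,2)] assms(3,5) by simp

lemma half_holder_on_primitive:
  fixes g :: "real \<Rightarrow> real"
  assumes "set_borel_measurable lborel {0<..<L} g" "set_integrable lborel {0<..<L} (\<lambda>z. (g z)^2)"
  shows "half_holder_on (LINT z:{0<..<L}|lborel. (g z)^2) {0..L} (\<lambda>x. LINT z:{0<..<x}|lborel. g z)"
  using primitive_diff_square_le[OF assms] by (simp add: half_holder_on_def mult.commute)

lemma half_holder_on_grid_square_le:
  assumes f: "half_holder_on \<beta> {0..1} f" and \<beta>: "0 \<le> \<beta>" and J: "0 < J"
    and grid: "\<And>k. k \<le> J \<Longrightarrow> \<bar>f (real k / real J)\<bar> \<le> \<theta>" and x: "x \<in> {0..1}"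
  shows "(f x)^2 \<le> 2 * \<theta>^2 + 2 * \<beta> / real J"
proof -
  obtain k where k: "k < J" "real k * 1 / real J \<le> x" "x \<le> (real k + 1) * 1 / real J"
    using ex_subinterval_index[OF J _ x] by auto
  define y where "y = real k / real J"
  have y: "y \<in> {0..1}" "\<bar>x - y\<bar> \<le> 1 / real J"
    using k by (auto simp: y_def add_divide_distrib)
  have "(f x)^2 \<le> 2 * (f y)^2 + 2 * (f x - f y)^2"
    using sum_squares_ge_zero[of "f x - 2 * f y" 0] by (simp add: power2_eq_square algebra_simps)
  also have "(f y)^2 \<le> \<theta>^2"
    using power_mono[OF grid[of k] abs_ge_zero, of 2] k(1) by (simp add: y_def)
  also have "(f x - f y)^2 \<le> \<beta> * (1 / real J)"
    using half_holder_onD[OF f x y(1)] mult_left_mono[OF y(2) \<beta>] by linarith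
  finally show ?thesis
    by simp
qed

lemma half_holder_grid_convergent_subseq:
  fixes G :: "nat \<Rightarrow> 'i::countable \<Rightarrow> real \<Rightarrow> real" and \<beta> :: "'i \<Rightarrow> real"
  assumes G_0: "\<And>n i. G n i 0 = 0" and G: "\<And>n i. half_holder_on (\<beta> i) {0..1} (G n i)"
  obtains r where "strict_mono r" and "\<And>i k J. k \<le> J \<Longrightarrow> convergent (\<lambda>n. G (r n) i (real k / real J))"
proof -
  (* Clipping by min 1 keeps every grid point in [0,1], where the Hoelder bound controls G. *)
  define X where "X n idx = (case idx of (i, J, k) \<Rightarrow> G n i (min 1 (real k / real J)))"
    for n and idx :: "'i \<times> nat \<times> nat"
  have "\<bar>X n idx\<bar> \<le> sqrt \<bar>\<beta> (fst idx)\<bar>" for n idx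
  proof -
    obtain i J k where idx: "idx = (i, J, k)"
      by (cases idx) auto
    define q where "q = min 1 (real k / real J)"
    have q: "0 \<le> q" "q \<le> 1"
      by (auto simp: q_def)
    have "(G n i q)^2 \<le> \<beta> i * q"
      using q by (intro half_holder_on_square_le[OF G _ G_0]) auto
    also have "\<dots> \<le> \<bar>\<beta> i\<bar>"
      using q by (metis abs_ge_self abs_mult_pos mult_left_le order_trans abs_ge_zero)
    finally show ?thesis
      by (simp add: X_def idx q_def real_le_rsqrt)
  qed
  then obtain r where r: "strict_mono r" and conv: "\<And>idx. convergent (\<lambda>n. X (r n) idx)"
    using bounded_seqs_common_convergent_subseq[of X] by blast
  show ?thesis
  proof (rule that[OF r])
    fix i and k J :: nat assume "k \<le> J"
    then show "convergent (\<lambda>n. G (r n) i (real k / real J))"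
      using conv[of "(i, J, k)"] by (cases "J = 0") (simp_all add: X_def divide_le_eq_1)
  qed
qed

section \<open>The weighted space L^2_{1/a}\<close>

lemma nL2w_commute: "nL2w a (\<lambda>x. f x - g x) = nL2w a (\<lambda>x. g x - f x)"
  by (simp add: nL2w_def power2_commute)

locale weight =
  fixes a :: "real \<Rightarrow> real"
  assumes continuous: "continuous_on {0..1} a"
    and positive: "\<And>x. 0 < x \<Longrightarrow> x \<le> 1 \<Longrightarrow> 0 < a x"
begin

definition a_sup :: real where
  "a_sup = (SUP x\<in>{0..1}. a x)"

lemma le_a_sup: "x \<in> {0..1} \<Longrightarrow> a x \<le> a_sup"
  unfolding a_sup_def using compact_continuous_image[OF continuous]
  by (intro cSUP_upper bounded_imp_bdd_above compact_imp_bounded) auto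

lemma a_sup_pos: "0 < a_sup"
  using positive[of 1] le_a_sup[of 1] by simp

lemma measurable_weight: "set_borel_measurable lborel {0<..<1} a"
proof -
  have "continuous_on {0<..<1} a"
    by (rule continuous_on_subset[OF continuous]) auto
  then have "(\<lambda>x. indicator {0<..<1} x *\<^sub>R a x) \<in> borel_measurable borel"
    by (intro borel_measurable_continuous_on_indicator) auto
  then show ?thesis
    by (simp add: set_borel_measurable_def)
qed

lemma square_le_a_sup: "x \<in> {0<..<1} \<Longrightarrow> y^2 \<le> a_sup * (y^2 / a x)"
  using positive[of x] le_a_sup[of x]
  by (simp add: field_simps mult_right_mono)

lemma nL2w_nonneg: "0 \<le> nL2w a f"
  unfolding nL2w_def set_lebesgue_integral_def
  by (rule integral_nonneg_AE) (auto simp: indicator_def less_imp_le[OF positive])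

lemma L2w_iff:
  "L2w a f \<longleftrightarrow> set_borel_measurable lborel {0<..<1} f
    \<and> set_integrable lborel {0<..<1} (\<lambda>x. (f x)^2 / a x)"
proof (intro iffI conjI)
  assume f: "set_borel_measurable lborel {0<..<1} f
    \<and> set_integrable lborel {0<..<1} (\<lambda>x. (f x)^2 / a x)"
  have "set_integrable lborel {0<..<1} (\<lambda>x. (f x)^2)"
  proof (rule set_integrable_bound)
    show "set_integrable lborel {0<..<1} (\<lambda>x. a_sup * ((f x)^2 / a x))"
      using f by (intro set_integrable_mult_right) simp
    show "set_borel_measurable lborel {0<..<1} (\<lambda>x. (f x)^2)"
      using f by (simp add: set_borel_measurable_square)
    show "AE x in lborel. x \<in> {0<..<1} \<longrightarrow> norm ((f x)^2) \<le> norm (a_sup * ((f x)^2 / a x))"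
      using square_le_a_sup a_sup_pos by (auto intro!: AE_I2 simp: less_imp_le[OF positive])
  qed
  then show "L2w a f"
    using f by (simp add: L2w_def)
qed (auto simp: L2w_def)

lemma L2w_measurable: "L2w a f \<Longrightarrow> set_borel_measurable lborel {0<..<1} f"
  and L2w_integrable: "L2w a f \<Longrightarrow> set_integrable lborel {0<..<1} (\<lambda>x. (f x)^2 / a x)"
  by (simp_all add: L2w_iff)

lemma L2w_cong_AE:
  assumes f: "L2w a f" and g: "set_borel_measurable lborel {0<..<1} g"
    and eq: "AE x in lborel. x \<in> {0<..<1} \<longrightarrow> f x = g x"
  shows "L2w a g"
proof -
  have "set_integrable lborel {0<..<1} (\<lambda>x. (g x)^2 / a x)"
  proof (rule set_integrable_bound[OF L2w_integrable[OF f]])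
    show "set_borel_measurable lborel {0<..<1} (\<lambda>x. (g x)^2 / a x)"
      using g measurable_weight by (simp add: set_borel_measurable_square_divide)
    show "AE x in lborel. x \<in> {0<..<1} \<longrightarrow> norm ((g x)^2 / a x) \<le> norm ((f x)^2 / a x)"
      using eq by eventually_elim simp
  qed
  then show ?thesis
    using g by (simp add: L2w_iff)
qed

lemma integral_square_le_nL2w:
  assumes "L2w a f"
  shows "(LINT x:{0<..<1}|lborel. (f x)^2) \<le> a_sup * nL2w a f"
  unfolding nL2w_def set_integral_mult_right[symmetric]
  using assms square_le_a_sup by (intro set_integral_mono set_integrable_mult_right) (auto simp: L2w_def)

lemma nL2w_add_le:
  assumes f: "L2w a f" and g: "L2w a g"
  shows "L2w a (\<lambda>x. f x + g x)" and "nL2w a (\<lambda>x. f x + g x) \<le> 2 * nL2w a f + 2 * nL2w a g"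
proof -
  have pointwise: "(f x + g x)^2 / a x \<le> 2 * ((f x)^2 / a x) + 2 * ((g x)^2 / a x)"
    if "x \<in> {0<..<1}" for x
  proof -
    have "(f x + g x)^2 \<le> 2 * (f x)^2 + 2 * (g x)^2"
      using sum_squares_ge_zero[of "f x - g x" 0] by (simp add: power2_eq_square algebra_simps)
    then show ?thesis
      using positive[of x] that by (simp add: divide_right_mono add_divide_distrib[symmetric])
  qed
  have bound: "set_integrable lborel {0<..<1} (\<lambda>x. 2 * ((f x)^2 / a x) + 2 * ((g x)^2 / a x))"
    using f g by (intro set_integral_add set_integrable_mult_right) (simp_all add: L2w_iff)
  have meas: "set_borel_measurable lborel {0<..<1} (\<lambda>x. f x + g x)"
    using f g by (simp add: L2w_iff set_borel_measurable_add)
  have int: "set_integrable lborel {0<..<1} (\<lambda>x. (f x + g x)^2 / a x)"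
  proof (rule set_integrable_bound[OF bound])
    show "set_borel_measurable lborel {0<..<1} (\<lambda>x. (f x + g x)^2 / a x)"
      using meas measurable_weight by (simp add: set_borel_measurable_square_divide)
    show "AE x in lborel. x \<in> {0<..<1} \<longrightarrow>
        norm ((f x + g x)^2 / a x) \<le> norm (2 * ((f x)^2 / a x) + 2 * ((g x)^2 / a x))"
      using pointwise by (auto intro!: AE_I2 simp: less_imp_le[OF positive])
  qed
  then show "L2w a (\<lambda>x. f x + g x)"
    using meas by (simp add: L2w_iff)
  have "nL2w a (\<lambda>x. f x + g x) \<le> (LINT x:{0<..<1}|lborel. 2 * ((f x)^2 / a x) + 2 * ((g x)^2 / a x))"
    unfolding nL2w_def using int bound pointwise by (rule set_integral_mono)
  also have "\<dots> = 2 * nL2w a f + 2 * nL2w a g"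
    unfolding nL2w_def
    using set_integral_add[OF set_integrable_mult_right set_integrable_mult_right, OF L2w_integrable L2w_integrable, OF f g]
    by (simp only: set_integral_mult_right)
  finally show "nL2w a (\<lambda>x. f x + g x) \<le> 2 * nL2w a f + 2 * nL2w a g" .
qed

lemma L2w_uminus: "L2w a f \<Longrightarrow> L2w a (\<lambda>x. - f x)"
  using set_borel_measurable_diff[of _ _ "\<lambda>_. 0" f] by (simp add: L2w_iff set_borel_measurable_def)

lemma L2w_diff: "L2w a f \<Longrightarrow> L2w a g \<Longrightarrow> L2w a (\<lambda>x. f x - g x)"
  using nL2w_add_le(1)[OF _ L2w_uminus] by simp

lemma nL2w_triangle:
  assumes "L2w a f" "L2w a g" "L2w a h"
  shows "nL2w a (\<lambda>x. f x - h x) \<le> 2 * nL2w a (\<lambda>x. f x - g x) + 2 * nL2w a (\<lambda>x. g x - h x)"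
  using nL2w_add_le(2)[OF L2w_diff[OF assms(1,2)] L2w_diff[OF assms(2,3)]] by simp

lemma nL2w_triangle3:
  assumes "L2w a f" "L2w a g" "L2w a h" "L2w a k"
  shows "nL2w a (\<lambda>x. f x - k x)
    \<le> 2 * nL2w a (\<lambda>x. f x - g x) + 4 * nL2w a (\<lambda>x. g x - h x) + 4 * nL2w a (\<lambda>x. h x - k x)"
  using nL2w_triangle[OF assms(1,2,4)] nL2w_triangle[OF assms(2,3,4)] by linarith

lemma nL2w_cong_AE:
  assumes "set_borel_measurable lborel {0<..<1} f" "set_borel_measurable lborel {0<..<1} g"
    and "AE x in lborel. x \<in> {0<..<1} \<longrightarrow> f x = g x"
  shows "nL2w a f = nL2w a g"
proof -
  have "set_borel_measurable lborel {0<..<1} (\<lambda>x. (f x)^2 / a x)"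
    "set_borel_measurable lborel {0<..<1} (\<lambda>x. (g x)^2 / a x)"
    using assms(1,2) measurable_weight by (simp_all add: set_borel_measurable_square_divide)
  then show ?thesis
    unfolding nL2w_def set_lebesgue_integral_def set_borel_measurable_def
    by (rule integral_cong_AE) (use assms(3) in \<open>auto simp: indicator_def\<close>)
qed

lemma nn_integral_eq_nL2w:
  assumes "set_integrable lborel {0<..<1} (\<lambda>x. (f x)^2 / a x)"
  shows "(\<integral>\<^sup>+x. ennreal (indicator {0<..<1} x * ((f x)^2 / a x)) \<partial>lborel) = ennreal (nL2w a f)"
  unfolding nL2w_def set_lebesgue_integral_def real_scaleR_def
  using assms by (intro nn_integral_eq_integral)
    (auto simp: set_integrable_def indicator_def less_imp_le[OF positive])

lemma nL2w_eq_0_imp_AE: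
  assumes "L2w a f" "nL2w a f = 0"
  shows "AE x in lborel. x \<in> {0<..<1} \<longrightarrow> f x = 0"
proof -
  have "AE x in lborel. indicator {0<..<1} x *\<^sub>R ((f x)^2 / a x) = 0"
    using assms integral_nonneg_eq_0_iff_AE[of lborel "\<lambda>x. indicator {0<..<1} x *\<^sub>R ((f x)^2 / a x)"]
    by (auto simp: L2w_iff set_integrable_def nL2w_def set_lebesgue_integral_def
        indicator_def less_imp_le[OF positive])
  then show ?thesis
    by eventually_elim (auto simp: indicator_def dest: positive)
qed

lemma nL2w_le_of_AE_tendsto:
  assumes g: "\<And>n. L2w a (g n)" and h: "set_borel_measurable lborel {0<..<1} h"
    and lim: "AE x in lborel. x \<in> {0<..<1} \<longrightarrow> (\<lambda>n. g n x) \<longlonglongrightarrow> h x"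
    and bound: "eventually (\<lambda>n. nL2w a (g n) \<le> B) sequentially"
  shows "L2w a h" and "nL2w a h \<le> B"
proof -
  define G where "G n x = indicator {0<..<1} x * ((g n x)^2 / a x)" for n x
  define H where "H x = indicator {0<..<1} x * ((h x)^2 / a x)" for x
  have H_meas: "H \<in> borel_measurable lborel"
    using set_borel_measurable_square_divide[OF _ h measurable_weight]
    by (simp add: H_def[abs_def] set_borel_measurable_def)
  have G_meas: "G n \<in> borel_measurable lborel" for n
    using set_borel_measurable_square_divide[OF _ L2w_measurable[OF g] measurable_weight]
    by (simp add: G_def[abs_def] set_borel_measurable_def)
  have nonneg: "0 \<le> G n x" "0 \<le> H x" for n x
    by (auto simp: G_def H_def indicator_def less_imp_le[OF positive])
  obtain n0 where "nL2w a (g n0) \<le> B"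
    using bound by (auto simp: eventually_sequentially)
  then have B: "0 \<le> B"
    using nL2w_nonneg[of "g n0"] by linarith
  have "(\<integral>\<^sup>+x. ennreal (H x) \<partial>lborel) = (\<integral>\<^sup>+x. liminf (\<lambda>n. ennreal (G n x)) \<partial>lborel)"
  proof (intro nn_integral_cong_AE, use lim in eventually_elim)
    case (elim x)
    have "(\<lambda>n. ennreal (G n x)) \<longlonglongrightarrow> ennreal (H x)"
      using elim positive[of x] unfolding G_def H_def
      by (cases "x \<in> {0<..<1}") (auto intro!: tendsto_intros)
    then show ?case
      by (simp add: lim_imp_Liminf)
  qed
  also have "\<dots> \<le> liminf (\<lambda>n. \<integral>\<^sup>+x. ennreal (G n x) \<partial>lborel)"
    using G_meas by (intro nn_integral_liminf) simp
  also have "\<dots> = liminf (\<lambda>n. ennreal (nL2w a (g n)))"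
    using nn_integral_eq_nL2w[OF L2w_integrable[OF g]] by (simp add: G_def)
  also have "\<dots> \<le> ennreal B"
    using bound by (intro Liminf_le) (auto elim: eventually_mono intro: ennreal_leI)
  finally have H_le: "(\<integral>\<^sup>+x. ennreal (H x) \<partial>lborel) \<le> ennreal B" .
  then have "integrable lborel H"
    using H_meas nonneg(2) by (intro integrableI_bounded) (auto simp: top.not_eq_extremum le_less_trans)
  then have "set_integrable lborel {0<..<1} (\<lambda>x. (h x)^2 / a x)"
    by (simp add: H_def[abs_def] set_integrable_def)
  then show "L2w a h"
    using h by (simp add: L2w_iff)
  then have "ennreal (nL2w a h) \<le> ennreal B"
    using H_le nn_integral_eq_nL2w[OF L2w_integrable] by (simp add: H_def)
  then show "nL2w a h \<le> B"
    using B by (simp add: ennreal_le_iff)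
qed

lemma AE_convergent_if_fast_cauchy:
  assumes f: "\<And>j. L2w a (f j)" and fast: "\<And>j. nL2w a (\<lambda>x. f (Suc j) x - f j x) \<le> (1/4)^j"
  shows "AE x in lborel. x \<in> {0<..<1} \<longrightarrow> convergent (\<lambda>j. f j x)"
proof -
  (* The series of the h j has finite integral, hence converges almost everywhere. *)
  define h where "h j x = 2^j * (indicator {0<..<1} x *\<^sub>R ((f (Suc j) x - f j x)^2 / a x))" for j x
  have h_nonneg: "0 \<le> h j x" for j x
    by (auto simp: h_def indicator_def less_imp_le[OF positive])
  have h_int: "integrable lborel (h j)" for j
    using L2w_integrable[OF L2w_diff[OF f f]]
    unfolding h_def[abs_def] set_integrable_def by (rule integrable_mult_right)
  have "(\<integral>\<^sup>+x. ennreal (h j x) \<partial>lborel) \<le> ennreal ((1/2)^j)" for j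
  proof -
    have "integral\<^sup>L lborel (h j) = 2^j * nL2w a (\<lambda>x. f (Suc j) x - f j x)"
      unfolding h_def nL2w_def set_lebesgue_integral_def by (rule integral_mult_right_zero)
    also have "\<dots> \<le> 2^j * (1/4)^j"
      using fast[of j] by simp
    also have "\<dots> = (1/2)^j"
      unfolding power_mult_distrib[symmetric] by simp
    finally show ?thesis
      using h_int h_nonneg by (simp add: nn_integral_eq_integral ennreal_leI)
  qed
  then have "(\<integral>\<^sup>+x. (\<Sum>j. ennreal (h j x)) \<partial>lborel) \<le> (\<Sum>j. ennreal ((1/2)^j))"
    using h_int by (subst nn_integral_suminf) (auto intro!: suminf_le borel_measurable_integrable)
  also have "\<dots> < \<infinity>"
    by (subst suminf_ennreal2) auto
  finally have "AE x in lborel. (\<Sum>j. ennreal (h j x)) \<noteq> \<infinity>"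
    using h_int by (intro nn_integral_PInf_AE) (auto intro: borel_measurable_integrable)
  then show ?thesis
  proof eventually_elim
    case (elim x)
    show ?case
    proof
      assume x: "x \<in> {0<..<1}"
      have "summable (\<lambda>j. h j x)"
        using elim h_nonneg by (intro summable_suminf_not_top) auto
      then show "convergent (\<lambda>j. f j x)"
        using x positive[of x] by (intro convergent_if_summable_weighted_diff_squares) (simp_all add: h_def)
    qed
  qed
qed

lemma L2w_fast_cauchy_limit:
  assumes f: "\<And>j. L2w a (f j)"
    and fast: "\<And>j n. j \<le> n \<Longrightarrow> nL2w a (\<lambda>x. f n x - f j x) \<le> (1/4)^j"
  shows "L2w a (\<lambda>x. lim (\<lambda>j. f j x))"
    and "\<And>j. nL2w a (\<lambda>x. f j x - lim (\<lambda>j. f j x)) \<le> (1/4)^j"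
    and "AE x in lborel. x \<in> {0<..<1} \<longrightarrow> (\<lambda>j. f j x) \<longlonglongrightarrow> lim (\<lambda>j. f j x)"
proof -
  define g where "g x = lim (\<lambda>j. f j x)" for x
  show lim: "AE x in lborel. x \<in> {0<..<1} \<longrightarrow> (\<lambda>j. f j x) \<longlonglongrightarrow> lim (\<lambda>j. f j x)"
    using AE_convergent_if_fast_cauchy[OF f fast[OF le_SucI[OF order_refl]]]
    by eventually_elim (auto simp: convergent_LIMSEQ_iff)
  have g_meas: "set_borel_measurable lborel {0<..<1} g"
    unfolding g_def by (rule set_borel_measurable_lim[OF L2w_measurable[OF f]])
  have "L2w a (\<lambda>x. f j x - f n x)" for j n
    by (rule L2w_diff[OF f f])
  moreover have "set_borel_measurable lborel {0<..<1} (\<lambda>x. f j x - g x)" for j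
    using L2w_measurable[OF f] g_meas by (intro set_borel_measurable_diff) auto
  moreover have "AE x in lborel. x \<in> {0<..<1} \<longrightarrow> (\<lambda>n. f j x - f n x) \<longlonglongrightarrow> f j x - g x" for j
    using lim by eventually_elim (auto simp: g_def intro: tendsto_intros)
  moreover have "eventually (\<lambda>n. nL2w a (\<lambda>x. f j x - f n x) \<le> (1/4)^j) sequentially" for j
    using eventually_ge_at_top[of j] by eventually_elim (metis fast nL2w_commute)
  ultimately have diff: "L2w a (\<lambda>x. f j x - g x)" "nL2w a (\<lambda>x. f j x - g x) \<le> (1/4)^j" for j
    using nL2w_le_of_AE_tendsto[where g = "\<lambda>n x. f j x - f n x"] by blast+
  show "nL2w a (\<lambda>x. f j x - lim (\<lambda>j. f j x)) \<le> (1/4)^j" for j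
    using diff(2) by (simp add: g_def)
  show "L2w a (\<lambda>x. lim (\<lambda>j. f j x))"
    using L2w_diff[OF f[of 0] diff(1)[of 0]] by (simp add: g_def)
qed

end

section \<open>Completeness of Y\<close>

definition uniformly_cauchy_L2w :: "(real \<Rightarrow> real) \<Rightarrow> real \<Rightarrow> (nat \<Rightarrow> real \<Rightarrow> real \<Rightarrow> real) \<Rightarrow> bool" where
  "uniformly_cauchy_L2w a T F \<longleftrightarrow>
    (\<forall>\<epsilon>>0. \<exists>N. \<forall>n\<ge>N. \<forall>p\<ge>N. \<forall>t\<in>{0..T}. nL2w a (\<lambda>x. F n t x - F p t x) < \<epsilon>)"

lemma uniformly_cauchy_L2w_fast_subseq:
  assumes "uniformly_cauchy_L2w a T F"
  obtains r where "strict_mono r"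
    and "\<And>j n t. j \<le> n \<Longrightarrow> t \<in> {0..T} \<Longrightarrow> nL2w a (\<lambda>x. F (r n) t x - F (r j) t x) < (1/4)^j"
proof -
  have "\<forall>j. \<exists>N. \<forall>n\<ge>N. \<forall>p\<ge>N. \<forall>t\<in>{0..T}. nL2w a (\<lambda>x. F n t x - F p t x) < (1/4::real)^j"
    using assms unfolding uniformly_cauchy_L2w_def by simp
  from choice[OF this] obtain N
    where N: "\<forall>j. \<forall>n\<ge>N j. \<forall>p\<ge>N j. \<forall>t\<in>{0..T}. nL2w a (\<lambda>x. F n t x - F p t x) < (1/4::real)^j"
    by blast
  define r where "r j = j + (\<Sum>i\<le>j. N i)" for j
  have "strict_mono r"
    unfolding strict_mono_Suc_iff r_def by simp
  moreover have "N j \<le> r j" for j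
    using member_le_sum[of j "{..j}" N] by (simp add: r_def)
  then have "N j \<le> r n" if "j \<le> n" for j n
    using strict_mono_less_eq[OF \<open>strict_mono r\<close>] that le_trans by blast
  ultimately show ?thesis
    using that N by (meson order_refl)
qed

context weight
begin

lemma inY_L2w: "inY a T v \<Longrightarrow> t \<in> {0..T} \<Longrightarrow> L2w a (v t)"
  by (simp add: inY_def)

lemma set_integrable_square_Qset:
  assumes T: "0 < T" and f_meas: "set_borel_measurable lborel (Qset T) (case_prod f)"
    and f: "\<And>t. t \<in> {0<..<T} \<Longrightarrow> L2w a (f t)"
    and bound: "\<And>t. t \<in> {0<..<T} \<Longrightarrow> nL2w a (f t) \<le> B"
  shows "set_integrable lborel (Qset T) (\<lambda>(t, x). (f t x)^2)"
    and "(LINT p:Qset T|lborel. (case p of (t, x) \<Rightarrow> (f t x)^2)) \<le> T * (a_sup * B)"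
proof -
  have "T / 2 \<in> {0<..<T}"
    using T by simp
  then have B: "0 \<le> B"
    using bound nL2w_nonneg order_trans by blast
  have slice_le: "(LINT x:{0<..<1}|lborel. (f t x)^2) \<le> a_sup * B" if "t \<in> {0<..<T}" for t
    using integral_square_le_nL2w[OF f[OF that]] bound[OF that] a_sup_pos
    by (meson mult_left_mono less_imp_le order_trans)
  have meas: "set_borel_measurable lborel (Qset T) (\<lambda>(t, x). (f t x)^2)"
    using set_borel_measurable_square[OF Qset_sets f_meas] by (simp add: case_prod_beta')
  note rect = set_integral_rectangle_le[where A = "{0<..<T}" and S = "{0<..<1}" and B = "a_sup * B",
      OF _ _ _ meas[unfolded Qset_def]]
  show "set_integrable lborel (Qset T) (\<lambda>(t, x). (f t x)^2)"
    using rect(1) f slice_le a_sup_pos B T unfolding Qset_def by (auto simp: L2w_def)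
  show "(LINT p:Qset T|lborel. (case p of (t, x) \<Rightarrow> (f t x)^2)) \<le> T * (a_sup * B)"
    using rect(2) f slice_le a_sup_pos B T unfolding Qset_def by (auto simp: L2w_def)
qed

lemma uniform_limit_continuous_L2w:
  fixes G :: "nat \<Rightarrow> real \<Rightarrow> real \<Rightarrow> real" and e :: "nat \<Rightarrow> real"
  assumes w: "\<And>t. t \<in> S \<Longrightarrow> L2w a (w t)" and G: "\<And>n t. t \<in> S \<Longrightarrow> L2w a (G n t)"
    and G_cont: "\<And>n. ((\<lambda>t. nL2w a (\<lambda>x. G n t x - G n t0 x)) \<longlongrightarrow> 0) (at t0 within S)"
    and approx: "\<And>n t. t \<in> S \<Longrightarrow> nL2w a (\<lambda>x. G n t x - w t x) \<le> e n"
    and e: "e \<longlonglongrightarrow> 0" and t0: "t0 \<in> S"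
  shows "((\<lambda>t. nL2w a (\<lambda>x. w t x - w t0 x)) \<longlongrightarrow> 0) (at t0 within S)"
proof (rule tendstoI)
  fix \<epsilon> :: real assume \<epsilon>: "0 < \<epsilon>"
  obtain n where n: "e n < \<epsilon> / 12"
    using order_tendstoD(2)[OF e, of "\<epsilon> / 12"] \<epsilon> by (auto simp: eventually_sequentially)
  have "eventually (\<lambda>t. nL2w a (\<lambda>x. G n t x - G n t0 x) < \<epsilon> / 8) (at t0 within S)"
    using order_tendstoD(2)[OF G_cont, of "\<epsilon> / 8"] \<epsilon> by simp
  moreover have "eventually (\<lambda>t. t \<in> S) (at t0 within S)"
    by (simp add: eventually_at_filter)
  ultimately show "eventually (\<lambda>t. dist (nL2w a (\<lambda>x. w t x - w t0 x)) 0 < \<epsilon>) (at t0 within S)"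
  proof eventually_elim
    case (elim t)
    have "nL2w a (\<lambda>x. w t x - w t0 x) \<le> 2 * nL2w a (\<lambda>x. w t x - G n t x)
        + 4 * nL2w a (\<lambda>x. G n t x - G n t0 x) + 4 * nL2w a (\<lambda>x. G n t0 x - w t0 x)"
      using elim(2) t0 by (intro nL2w_triangle3 w G)
    also have "\<dots> < \<epsilon>"
      using approx[OF elim(2), of n] approx[OF t0, of n] elim(1) n
      by (simp add: nL2w_commute[of a "w t"])
    finally show ?case
      using nL2w_nonneg by simp
  qed
qed

lemma inY_of_uniform_limit:
  fixes e :: "nat \<Rightarrow> real"
  assumes T: "0 < T" and F: "\<And>n. inY a T (F n)"
    and w_meas: "set_borel_measurable lborel (Qset T) (case_prod w)"
    and w: "\<And>t. t \<in> {0..T} \<Longrightarrow> L2w a (w t)"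
    and approx: "\<And>n t. t \<in> {0..T} \<Longrightarrow> nL2w a (\<lambda>x. F n t x - w t x) \<le> e n" and e: "e \<longlonglongrightarrow> 0"
  shows "inY a T w"
    and "(LINT p:Qset T|lborel. (case p of (t, x) \<Rightarrow> (F n t x - w t x)^2)) \<le> T * (a_sup * e n)"
proof -
  note F_L2w = inY_L2w[OF F]
  have diff_meas: "set_borel_measurable lborel (Qset T) (case_prod (\<lambda>t x. F n t x - w t x))" for n
    using set_borel_measurable_diff[OF Qset_sets _ w_meas, of "case_prod (F n)"] F[of n]
    by (simp add: inY_def case_prod_beta')
  have diff_L2w: "L2w a (\<lambda>x. F n t x - w t x)" "nL2w a (\<lambda>x. F n t x - w t x) \<le> e n"
    if "t \<in> {0<..<T}" for n t
    using that L2w_diff[OF F_L2w w] approx by auto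
  note diff_square = set_integrable_square_Qset[OF T diff_meas diff_L2w]
  then show "(LINT p:Qset T|lborel. (case p of (t, x) \<Rightarrow> (F n t x - w t x)^2)) \<le> T * (a_sup * e n)"
    by blast
  have "set_integrable lborel (Qset T) (\<lambda>p. (case_prod w p)^2)"
  proof (rule set_integrable_square_if_diff[OF Qset_sets _ _ w_meas])
    show "set_integrable lborel (Qset T) (\<lambda>p. (case_prod (F 0) p)^2)"
      using F[of 0] by (simp add: inY_def case_prod_beta')
    show "set_integrable lborel (Qset T) (\<lambda>p. (case_prod (F 0) p - case_prod w p)^2)"
      using diff_square(1)[of 0] by (simp add: case_prod_beta')
  qed
  moreover have "((\<lambda>t. nL2w a (\<lambda>x. w t x - w t0 x)) \<longlongrightarrow> 0) (at t0 within {0..T})"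
    if t0: "t0 \<in> {0..T}" for t0
  proof (rule uniform_limit_continuous_L2w[where G = F, OF w F_L2w _ approx e t0])
    show "((\<lambda>t. nL2w a (\<lambda>x. F n t x - F n t0 x)) \<longlongrightarrow> 0) (at t0 within {0..T})" for n
      using F[of n] t0 by (simp add: inY_def)
  qed
  ultimately show "inY a T w"
    using w w_meas by (simp add: inY_def case_prod_beta')
qed

lemma uniformly_cauchy_L2w_imp_convergent:
  assumes T: "0 < T" and F: "\<And>n. inY a T (F n)" and cauchy: "uniformly_cauchy_L2w a T F"
  obtains r w where "strict_mono r" and "inY a T w"
    and "\<forall>\<epsilon>>0. eventually (\<lambda>n. \<forall>t\<in>{0..T}. nL2w a (\<lambda>x. F (r n) t x - w t x) < \<epsilon>) sequentially"
    and "(\<lambda>n. LINT p:Qset T|lborel. (case p of (t, x) \<Rightarrow> (F (r n) t x - w t x)^2)) \<longlonglongrightarrow> 0"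
proof -
  obtain r where r: "strict_mono r"
    and fast: "\<And>j n t. j \<le> n \<Longrightarrow> t \<in> {0..T} \<Longrightarrow> nL2w a (\<lambda>x. F (r n) t x - F (r j) t x) < (1/4)^j"
    using uniformly_cauchy_L2w_fast_subseq[OF cauchy] by blast
  define w where "w t x = lim (\<lambda>j. F (r j) t x)" for t x
  have w_L2w: "L2w a (w t)" and approx: "nL2w a (\<lambda>x. F (r n) t x - w t x) \<le> (1/4)^n"
    if t: "t \<in> {0..T}" for t n
  proof -
    have "nL2w a (\<lambda>x. F (r n) t x - F (r j) t x) \<le> (1/4)^j" if "j \<le> n" for j n
      using fast[OF that t] by simp
    from L2w_fast_cauchy_limit[of "\<lambda>j. F (r j) t", OF inY_L2w[OF F t] this]
    show "L2w a (w t)" "nL2w a (\<lambda>x. F (r n) t x - w t x) \<le> (1/4)^n"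
      unfolding w_def by blast+
  qed
  have "set_borel_measurable lborel (Qset T) (case_prod (F (r j)))" for j
    using F by (simp add: inY_def)
  from set_borel_measurable_lim[OF this] have w_meas: "set_borel_measurable lborel (Qset T) (case_prod w)"
    by (simp add: w_def[abs_def] case_prod_beta')
  have quarter_powers: "(\<lambda>n. (1/4::real)^n) \<longlonglongrightarrow> 0"
    by (rule LIMSEQ_power_zero) simp
  note limit = inY_of_uniform_limit[where F = "\<lambda>n. F (r n)", OF T F w_meas w_L2w approx quarter_powers]
  have "\<forall>\<epsilon>>0. eventually (\<lambda>n. \<forall>t\<in>{0..T}. nL2w a (\<lambda>x. F (r n) t x - w t x) < \<epsilon>) sequentially"
  proof (intro allI impI)
    fix \<epsilon> :: real assume "0 < \<epsilon>"
    then have "eventually (\<lambda>n. (1/4::real)^n < \<epsilon>) sequentially"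
      by (rule order_tendstoD(2)[OF quarter_powers])
    then show "eventually (\<lambda>n. \<forall>t\<in>{0..T}. nL2w a (\<lambda>x. F (r n) t x - w t x) < \<epsilon>) sequentially"
      by eventually_elim (use approx in \<open>fastforce intro: le_less_trans\<close>)
  qed
  moreover have "(\<lambda>n. LINT p:Qset T|lborel. (case p of (t, x) \<Rightarrow> (F (r n) t x - w t x)^2)) \<longlonglongrightarrow> 0"
  proof (rule tendsto_sandwich[OF _ _ tendsto_const])
    show "eventually (\<lambda>n. 0 \<le> (LINT p:Qset T|lborel. (case p of (t, x) \<Rightarrow> (F (r n) t x - w t x)^2))) sequentially"
      by (auto simp: set_lebesgue_integral_def intro!: integral_nonneg_AE split: prod.splits)
    show "eventually (\<lambda>n. (LINT p:Qset T|lborel. (case p of (t, x) \<Rightarrow> (F (r n) t x - w t x)^2))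
        \<le> T * (a_sup * (1/4)^n)) sequentially"
      using limit(2) by simp
    show "(\<lambda>n. T * (a_sup * (1/4::real)^n)) \<longlonglongrightarrow> 0"
      by (intro tendsto_mult_right_zero quarter_powers)
  qed
  ultimately show ?thesis
    using r limit(1) by (rule that[rotated 2])
qed

lemma AE_nL2w_eq_0_if_AE_eq_Qset:
  assumes v: "\<And>s. s \<in> {0<..<T} \<Longrightarrow> L2w a (v s)" and w: "\<And>s. s \<in> {0<..<T} \<Longrightarrow> L2w a (w s)"
    and AE_eq: "AE p in lborel. p \<in> Qset T \<longrightarrow> v (fst p) (snd p) = w (fst p) (snd p)"
  shows "AE s in lborel. s \<in> {0<..<T} \<longrightarrow> nL2w a (\<lambda>x. v s x - w s x) = 0"
proof -
  from AE_Qset_slices[OF AE_eq] show ?thesis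
  proof eventually_elim
    case (elim s)
    show ?case
    proof
      assume s: "s \<in> {0<..<T}"
      have "nL2w a (\<lambda>x. v s x - w s x) = nL2w a (\<lambda>_. 0)"
      proof (rule nL2w_cong_AE)
        show "set_borel_measurable lborel {0<..<1} (\<lambda>x. v s x - w s x)"
          using s by (intro L2w_measurable L2w_diff v w)
        show "AE x in lborel. x \<in> {0<..<1} \<longrightarrow> v s x - w s x = 0"
          using elim by eventually_elim (use s in \<open>auto simp: Qset_def\<close>)
      qed (simp add: set_borel_measurable_def)
      then show "nL2w a (\<lambda>x. v s x - w s x) = 0"
        by (simp add: nL2w_def)
    qed
  qed
qed

lemma inY_AE_eq_imp_nL2w_eq_0:
  assumes T: "0 < T" and v: "inY a T v" and w: "inY a T w"
    and AE_eq: "AE p in lborel. p \<in> Qset T \<longrightarrow> v (fst p) (snd p) = w (fst p) (snd p)"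
    and t: "t \<in> {0..T}"
  shows "nL2w a (\<lambda>x. v t x - w t x) = 0"
proof -
  have AE_zero: "AE s in lborel. s \<in> {0<..<T} \<longrightarrow> nL2w a (\<lambda>x. v s x - w s x) = 0"
    using AE_eq by (intro AE_nL2w_eq_0_if_AE_eq_Qset inY_L2w[OF v] inY_L2w[OF w]) auto
  have small: "nL2w a (\<lambda>x. v t x - w t x) < \<epsilon>" if \<epsilon>: "0 < \<epsilon>" for \<epsilon>
  proof -
    have "eventually (\<lambda>s. nL2w a (\<lambda>x. v s x - v t x) < \<epsilon> / 8 \<and> nL2w a (\<lambda>x. w s x - w t x) < \<epsilon> / 8)
        (at t within {0..T})"
      using v w t \<epsilon> by (intro eventually_conj order_tendstoD(2)) (auto simp: inY_def)
    then obtain \<delta> where \<delta>: "0 < \<delta>"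
      and close: "\<And>s. s \<in> {0..T} \<Longrightarrow> s \<noteq> t \<Longrightarrow> dist s t < \<delta>
        \<Longrightarrow> nL2w a (\<lambda>x. v s x - v t x) < \<epsilon> / 8 \<and> nL2w a (\<lambda>x. w s x - w t x) < \<epsilon> / 8"
      unfolding eventually_at by blast
    have "AE s in lborel. s \<noteq> t \<and> (s \<in> {0<..<T} \<longrightarrow> nL2w a (\<lambda>x. v s x - w s x) = 0)"
      using AE_zero AE_lborel_singleton[of t] by eventually_elim auto
    moreover have "max 0 (t - \<delta>) < min T (t + \<delta>)"
      using t T \<delta> by auto
    ultimately obtain s where s: "s \<in> {max 0 (t - \<delta>)<..<min T (t + \<delta>)}" "s \<noteq> t"
      and zero: "s \<in> {0<..<T} \<longrightarrow> nL2w a (\<lambda>x. v s x - w s x) = 0"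
      by (rule AE_imp_ex_in_interval) blast
    have s_in: "s \<in> {0<..<T}" "s \<in> {0..T}" and "dist s t < \<delta>"
      using s by (auto simp: dist_real_def)
    then have "nL2w a (\<lambda>x. v s x - v t x) < \<epsilon> / 8" "nL2w a (\<lambda>x. w s x - w t x) < \<epsilon> / 8"
      using close s(2) by blast+
    moreover have "nL2w a (\<lambda>x. v t x - w t x) \<le> 2 * nL2w a (\<lambda>x. v t x - v s x)
        + 4 * nL2w a (\<lambda>x. v s x - w s x) + 4 * nL2w a (\<lambda>x. w s x - w t x)"
      using t s_in by (intro nL2w_triangle3 inY_L2w[OF v] inY_L2w[OF w])
    ultimately show ?thesis
      using zero s_in \<epsilon> by (simp add: nL2w_commute[of a "v t"])
  qed
  show ?thesis
    using small[of "nL2w a (\<lambda>x. v t x - w t x)"] nL2w_nonneg[of "\<lambda>x. v t x - w t x"] by linarith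
qed

end

section \<open>Elements of X\<close>

definition time_primitive :: "(real \<Rightarrow> real) \<Rightarrow> (real \<Rightarrow> real \<Rightarrow> real) \<Rightarrow> real \<Rightarrow> real \<Rightarrow> real" where
  "time_primitive \<xi> ut t x = \<xi> x + (LINT s:{0<..<t}|lborel. ut s x)"

lemma time_primitive_measurable:
  assumes ut: "set_borel_measurable lborel (Qset T) (case_prod ut)"
    and \<xi>: "set_borel_measurable lborel {0<..<1} \<xi>"
  shows "set_borel_measurable lborel (Qset T) (case_prod (time_primitive \<xi> ut))"
    and "t \<le> T \<Longrightarrow> set_borel_measurable lborel {0<..<1} (time_primitive \<xi> ut t)"
proof -
  define U where "U p = indicator (Qset T) p * case_prod ut p" for p
  have [measurable]: "U \<in> borel_measurable (lborel \<Otimes>\<^sub>M lborel)"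
    using ut by (simp add: U_def[abs_def] set_borel_measurable_def lborel_prod)
  have [measurable]: "(\<lambda>x. indicator {0<..<1} x * \<xi> x) \<in> borel_measurable lborel"
    using \<xi> by (simp add: set_borel_measurable_def)
  have [measurable]: "Qset T \<in> sets (lborel \<Otimes>\<^sub>M lborel)"
    unfolding Qset_def by (intro pair_measureI) auto
  define V where "V t x = (LBINT s. (if 0 < s \<and> s < t then U (s, x) else 0))" for t x
  have V_eq: "(LINT s:{0<..<t}|lborel. ut s x) = V t x" if "t \<le> T" "x \<in> {0<..<1}" for t x
    unfolding set_lebesgue_integral_def V_def using that
    by (intro Bochner_Integration.integral_cong) (auto simp: U_def Qset_def indicator_def)
  have [measurable]: "(\<lambda>p. V (fst p) (snd p)) \<in> borel_measurable (lborel \<Otimes>\<^sub>M lborel)"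
    unfolding V_def by (rule lborel.borel_measurable_lebesgue_integral) measurable
  have "(\<lambda>p. indicator (Qset T) p *\<^sub>R case_prod (time_primitive \<xi> ut) p)
      = (\<lambda>p. indicator (Qset T) p * (indicator {0<..<1} (snd p) * \<xi> (snd p) + V (fst p) (snd p)))"
    using V_eq by (auto simp: Qset_def time_primitive_def indicator_def)
  then show "set_borel_measurable lborel (Qset T) (case_prod (time_primitive \<xi> ut))"
    unfolding set_borel_measurable_def lborel_prod[symmetric] by simp
  assume "t \<le> T"
  have [measurable]: "(\<lambda>x. V t x) \<in> borel_measurable lborel"
    unfolding V_def by (rule lborel.borel_measurable_lebesgue_integral) measurable
  have "(\<lambda>x. indicator {0<..<1} x *\<^sub>R time_primitive \<xi> ut t x)
      = (\<lambda>x. indicator {0<..<1} x * \<xi> x + indicator {0<..<1} x * V t x)"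
    using V_eq[OF \<open>t \<le> T\<close>] by (auto simp: time_primitive_def indicator_def)
  then show "set_borel_measurable lborel {0<..<1} (time_primitive \<xi> ut t)"
    unfolding set_borel_measurable_def by simp
qed

context weight
begin

lemma Qset_time_slices:
  assumes ut_meas: "set_borel_measurable lborel (Qset T) (case_prod ut)"
    and ut_int: "set_integrable lborel (Qset T) (\<lambda>(t, x). (ut t x)^2 / a x)"
  obtains K where "integrable lborel K" and "\<And>x. 0 \<le> K x"
    and "(LBINT x. K x) = (LINT p:Qset T|lborel. (case p of (t, x) \<Rightarrow> (ut t x)^2 / a x))"
    and "AE x in lborel. x \<in> {0<..<1} \<longrightarrow> set_borel_measurable lborel {0<..<T} (\<lambda>\<sigma>. ut \<sigma> x)
      \<and> set_integrable lborel {0<..<T} (\<lambda>\<sigma>. (ut \<sigma> x)^2)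
      \<and> (LINT \<sigma>:{0<..<T}|lborel. (ut \<sigma> x)^2) = a x * K x"
proof -
  define F where "F p = indicator (Qset T) p * (case p of (\<sigma>, x) \<Rightarrow> (ut \<sigma> x)^2 / a x)" for p
  define K where "K x = (LBINT \<sigma>. F (\<sigma>, x))" for x
  have F_int: "integrable (lborel \<Otimes>\<^sub>M lborel) (\<lambda>(\<sigma>, x). F (\<sigma>, x))"
    using ut_int by (simp add: F_def[abs_def] set_integrable_def lborel_prod case_prod_beta')
  have [measurable]: "(\<lambda>p. indicator (Qset T) p * case_prod ut p) \<in> borel_measurable (lborel \<Otimes>\<^sub>M lborel)"
    using ut_meas by (simp add: set_borel_measurable_def lborel_prod)
  have slice: "set_borel_measurable lborel {0<..<T} (\<lambda>\<sigma>. ut \<sigma> x)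
      \<and> set_integrable lborel {0<..<T} (\<lambda>\<sigma>. (ut \<sigma> x)^2)
      \<and> (LINT \<sigma>:{0<..<T}|lborel. (ut \<sigma> x)^2) = a x * K x"
    if x: "x \<in> {0<..<1}" and F_x: "integrable lborel (\<lambda>\<sigma>. F (\<sigma>, x))" for x
  proof (intro conjI)
    have ax: "0 < a x"
      using x by (simp add: positive)
    have F_slice: "F (\<sigma>, x) = indicator {0<..<T} \<sigma> * ((ut \<sigma> x)^2 / a x)" for \<sigma>
      using x by (simp add: F_def Qset_def indicator_def)
    have "(\<lambda>\<sigma>. indicator (Qset T) (\<sigma>, x) * case_prod ut (\<sigma>, x)) \<in> borel_measurable lborel"
      by measurable
    also have "(\<lambda>\<sigma>. indicator (Qset T) (\<sigma>, x) * case_prod ut (\<sigma>, x)) = (\<lambda>\<sigma>. indicator {0<..<T} \<sigma> *\<^sub>R ut \<sigma> x)"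
      using x by (auto simp: Qset_def indicator_def)
    finally show "set_borel_measurable lborel {0<..<T} (\<lambda>\<sigma>. ut \<sigma> x)"
      unfolding set_borel_measurable_def .
    have "set_integrable lborel {0<..<T} (\<lambda>\<sigma>. (ut \<sigma> x)^2 / a x)"
      using F_x unfolding set_integrable_def F_slice real_scaleR_def .
    then show "set_integrable lborel {0<..<T} (\<lambda>\<sigma>. (ut \<sigma> x)^2)"
      using ax by simp
    show "(LINT \<sigma>:{0<..<T}|lborel. (ut \<sigma> x)^2) = a x * K x"
      using ax by (simp add: K_def F_slice set_lebesgue_integral_def)
  qed
  show ?thesis
  proof (rule that)
    show "integrable lborel K"
      unfolding K_def by (rule lborel_pair.integrable_snd[OF F_int])
    show "0 \<le> K x" for x
      unfolding K_def F_def Qset_def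
      by (intro integral_nonneg_AE) (auto simp: indicator_def less_imp_le[OF positive])
    show "(LBINT x. K x) = (LINT p:Qset T|lborel. (case p of (t, x) \<Rightarrow> (ut t x)^2 / a x))"
      using lborel_pair.integral_snd[OF F_int]
      by (simp add: K_def F_def[abs_def] set_lebesgue_integral_def lborel_prod case_prod_beta')
    show "AE x in lborel. x \<in> {0<..<1} \<longrightarrow> set_borel_measurable lborel {0<..<T} (\<lambda>\<sigma>. ut \<sigma> x)
        \<and> set_integrable lborel {0<..<T} (\<lambda>\<sigma>. (ut \<sigma> x)^2)
        \<and> (LINT \<sigma>:{0<..<T}|lborel. (ut \<sigma> x)^2) = a x * K x"
      using lborel_pair.AE_integrable_snd[OF F_int] by eventually_elim (simp add: slice)
  qed
qed

lemma time_primitive_diff: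
  assumes ut_meas: "set_borel_measurable lborel (Qset T) (case_prod ut)"
    and ut_int: "set_integrable lborel (Qset T) (\<lambda>(t, x). (ut t x)^2 / a x)"
    and \<xi>: "L2w a \<xi>" and ts: "t \<in> {0..T}" "s \<in> {0..T}"
  shows "L2w a (\<lambda>x. time_primitive \<xi> ut t x - time_primitive \<xi> ut s x)"
    and "nL2w a (\<lambda>x. time_primitive \<xi> ut t x - time_primitive \<xi> ut s x)
      \<le> \<bar>t - s\<bar> * (LINT p:Qset T|lborel. (case p of (t, x) \<Rightarrow> (ut t x)^2 / a x))"
proof -
  define P where "P = time_primitive \<xi> ut"
  obtain K where K_int: "integrable lborel K" and K_nonneg: "\<And>x. 0 \<le> K x"
    and K_total: "(LBINT x. K x) = (LINT p:Qset T|lborel. (case p of (t, x) \<Rightarrow> (ut t x)^2 / a x))"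
    and slices: "AE x in lborel. x \<in> {0<..<1} \<longrightarrow> set_borel_measurable lborel {0<..<T} (\<lambda>\<sigma>. ut \<sigma> x)
      \<and> set_integrable lborel {0<..<T} (\<lambda>\<sigma>. (ut \<sigma> x)^2)
      \<and> (LINT \<sigma>:{0<..<T}|lborel. (ut \<sigma> x)^2) = a x * K x"
    using Qset_time_slices[OF ut_meas ut_int] by blast
  have AE_pointwise: "AE x in lborel. x \<in> {0<..<1} \<longrightarrow> (P t x - P s x)^2 / a x \<le> \<bar>t - s\<bar> * K x"
    using slices
  proof eventually_elim
    case (elim x)
    show ?case
    proof
      assume x: "x \<in> {0<..<1}"
      then have "(P t x - P s x)^2 \<le> \<bar>t - s\<bar> * (a x * K x)"
        using primitive_diff_square_le[OF _ _ ts, of "\<lambda>\<sigma>. ut \<sigma> x"] elim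
        by (simp add: P_def time_primitive_def)
      then show "(P t x - P s x)^2 / a x \<le> \<bar>t - s\<bar> * K x"
        using x positive[of x] by (simp add: field_simps)
    qed
  qed
  have diff_meas: "set_borel_measurable lborel {0<..<1} (\<lambda>x. P t x - P s x)"
    using time_primitive_measurable(2)[OF ut_meas L2w_measurable[OF \<xi>]] ts
    by (intro set_borel_measurable_diff) (auto simp: P_def)
  have "set_integrable lborel {0<..<1} (\<lambda>x. (P t x - P s x)^2 / a x)"
  proof (rule set_integrable_bound)
    show "set_integrable lborel {0<..<1} (\<lambda>x. \<bar>t - s\<bar> * K x)"
      using K_int unfolding set_integrable_def by (intro integrable_mult_indicator) auto
    show "set_borel_measurable lborel {0<..<1} (\<lambda>x. (P t x - P s x)^2 / a x)"
      using diff_meas measurable_weight by (simp add: set_borel_measurable_square_divide)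
    show "AE x in lborel. x \<in> {0<..<1} \<longrightarrow> norm ((P t x - P s x)^2 / a x) \<le> norm (\<bar>t - s\<bar> * K x)"
      using AE_pointwise by eventually_elim (auto simp: less_imp_le[OF positive])
  qed
  then show "L2w a (\<lambda>x. time_primitive \<xi> ut t x - time_primitive \<xi> ut s x)"
    using diff_meas by (simp add: L2w_iff P_def)
  have "nL2w a (\<lambda>x. P t x - P s x) = (LBINT x. indicator {0<..<1} x * ((P t x - P s x)^2 / a x))"
    by (simp add: nL2w_def set_lebesgue_integral_def)
  also have "\<dots> \<le> (LBINT x. \<bar>t - s\<bar> * K x)"
    using K_int AE_pointwise K_nonneg
    by (intro integral_mono_AE') (auto simp: indicator_def elim!: AE_mp intro!: AE_I2)
  finally show "nL2w a (\<lambda>x. time_primitive \<xi> ut t x - time_primitive \<xi> ut s x)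
      \<le> \<bar>t - s\<bar> * (LINT p:Qset T|lborel. (case p of (t, x) \<Rightarrow> (ut t x)^2 / a x))"
    by (simp add: P_def K_total)
qed

lemma time_primitive_inY:
  assumes T: "0 < T" and ut_meas: "set_borel_measurable lborel (Qset T) (case_prod ut)"
    and ut_int: "set_integrable lborel (Qset T) (\<lambda>(t, x). (ut t x)^2 / a x)"
    and \<xi>: "L2w a \<xi>"
  shows "inY a T (time_primitive \<xi> ut)"
proof -
  define P where "P = time_primitive \<xi> ut"
  define K where "K = (LINT p:Qset T|lborel. (case p of (t, x) \<Rightarrow> (ut t x)^2 / a x))"
  note diff = time_primitive_diff[OF ut_meas ut_int \<xi>, folded P_def K_def]
  have K_nonneg: "0 \<le> K"
    unfolding K_def set_lebesgue_integral_def Qset_def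
    by (intro integral_nonneg_AE) (auto simp: indicator_def less_imp_le[OF positive])
  have P_0: "P 0 = \<xi>"
    by (simp add: P_def time_primitive_def fun_eq_iff set_lebesgue_integral_def)
  have P_L2w: "L2w a (P t)" if "t \<in> {0..T}" for t
    using nL2w_add_le(1)[OF \<xi> diff(1)[OF that, of 0]] T by (simp add: P_0)
  have "((\<lambda>t. nL2w a (\<lambda>x. P t x - P t0 x)) \<longlongrightarrow> 0) (at t0 within {0..T})" if t0: "t0 \<in> {0..T}" for t0
  proof (rule tendsto_sandwich[OF _ _ tendsto_const])
    show "\<forall>\<^sub>F t in at t0 within {0..T}. 0 \<le> nL2w a (\<lambda>x. P t x - P t0 x)"
      by (simp add: nL2w_nonneg)
    show "\<forall>\<^sub>F t in at t0 within {0..T}. nL2w a (\<lambda>x. P t x - P t0 x) \<le> \<bar>t - t0\<bar> * K"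
      using diff(2) t0 by (auto simp: eventually_at_filter)
    have "((\<lambda>t. \<bar>t - t0\<bar> * K) \<longlongrightarrow> \<bar>t0 - t0\<bar> * K) (at t0 within {0..T})"
      by (intro tendsto_intros)
    then show "((\<lambda>t. \<bar>t - t0\<bar> * K) \<longlongrightarrow> 0) (at t0 within {0..T})"
      by simp
  qed
  moreover have "set_borel_measurable lborel (Qset T) (case_prod P)"
    unfolding P_def by (rule time_primitive_measurable(1)[OF ut_meas L2w_measurable[OF \<xi>]])
  moreover have "nL2w a (P t) \<le> 2 * nL2w a \<xi> + 2 * (T * K)" if "t \<in> {0<..<T}" for t
  proof -
    have "nL2w a (P t) \<le> 2 * nL2w a \<xi> + 2 * nL2w a (\<lambda>x. P t x - P 0 x)"
      using nL2w_add_le(2)[OF \<xi> diff(1)[of t 0]] that T by (simp add: P_0)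
    also have "nL2w a (\<lambda>x. P t x - P 0 x) \<le> T * K"
      using diff(2)[of t 0] that K_nonneg mult_right_mono[of t T K] by auto
    finally show ?thesis
      by simp
  qed
  ultimately show ?thesis
    using P_L2w set_integrable_square_Qset(1)[OF T, of P] unfolding P_def[symmetric]
    by (auto simp: inY_def)
qed

lemma normX2_nonneg: "0 \<le> normX2 a T u ut ux uxx"
  unfolding normX2_def set_lebesgue_integral_def
  by (intro integral_nonneg_AE AE_I2)
     (auto simp: Qset_def indicator_def less_imp_le[OF positive] split: prod.splits)

lemma normX2_ge:
  assumes X: "inX a T u ut ux uxx"
  shows "(LINT p:Qset T|lborel. (case p of (t, x) \<Rightarrow> (ut t x)^2 / a x)) \<le> normX2 a T u ut ux uxx"
    and "(LINT p:Qset T|lborel. (case p of (t, x) \<Rightarrow> (ux t x)^2)) \<le> normX2 a T u ut ux uxx"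
proof -
  define f1 f2 f3 f4 where
    "f1 = (\<lambda>(t, x). (u t x)^2 / a x)" and "f2 = (\<lambda>(t, x). (ux t x)^2)"
    and "f3 = (\<lambda>(t, x). (a x * uxx t x)^2 / a x)" and "f4 = (\<lambda>(t, x). (ut t x)^2 / a x)"
  have int: "set_integrable lborel (Qset T) f1" "set_integrable lborel (Qset T) f2"
    "set_integrable lborel (Qset T) f3" "set_integrable lborel (Qset T) f4"
    using X by (simp_all add: inX_def f1_def f2_def f3_def f4_def)
  have nonneg: "0 \<le> f1 p" "0 \<le> f2 p" "0 \<le> f3 p" "0 \<le> f4 p" if "p \<in> Qset T" for p
    using that by (auto simp: f1_def f2_def f3_def f4_def Qset_def less_imp_le[OF positive])
  have sum_int: "set_integrable lborel (Qset T) (\<lambda>p. f1 p + f2 p + f3 p + f4 p)"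
    using int by (intro set_integral_add)
  have norm: "normX2 a T u ut ux uxx = (LINT p:Qset T|lborel. f1 p + f2 p + f3 p + f4 p)"
    by (simp add: normX2_def f1_def f2_def f3_def f4_def case_prod_beta')
  show "(LINT p:Qset T|lborel. (case p of (t, x) \<Rightarrow> (ut t x)^2 / a x)) \<le> normX2 a T u ut ux uxx"
    unfolding norm f4_def[symmetric] using int(4) sum_int nonneg by (intro set_integral_mono) auto
  show "(LINT p:Qset T|lborel. (case p of (t, x) \<Rightarrow> (ux t x)^2)) \<le> normX2 a T u ut ux uxx"
    unfolding norm f2_def[symmetric] using int(2) sum_int nonneg by (intro set_integral_mono) auto
qed

lemma inX_time_primitive:
  assumes T: "0 < T" and X: "inX a T u ut ux uxx"
  obtains \<xi> where "inY a T (time_primitive \<xi> ut)"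
    and "AE p in lborel. p \<in> Qset T \<longrightarrow> u (fst p) (snd p) = time_primitive \<xi> ut (fst p) (snd p)"
    and "\<And>t s. t \<in> {0..T} \<Longrightarrow> s \<in> {0..T} \<Longrightarrow>
      nL2w a (\<lambda>x. time_primitive \<xi> ut t x - time_primitive \<xi> ut s x)
        \<le> \<bar>t - s\<bar> * (LINT p:Qset T|lborel. (case p of (t, x) \<Rightarrow> (ut t x)^2 / a x))"
proof -
  have ut: "set_borel_measurable lborel (Qset T) (case_prod ut)"
    "set_integrable lborel (Qset T) (\<lambda>(t, x). (ut t x)^2 / a x)"
    using X by (simp_all add: inX_def)
  obtain \<xi> where \<xi>: "L2w a \<xi>" and AE_eq: "AE p in lborel. p \<in> Qset T \<longrightarrow>
      u (fst p) (snd p) = \<xi> (snd p) + (LINT s:{0<..<fst p}|lborel. ut s (snd p))"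
    using X by (auto simp: inX_def)
  show ?thesis
  proof (rule that[of \<xi>])
    show "inY a T (time_primitive \<xi> ut)"
      by (rule time_primitive_inY[OF T ut \<xi>])
    show "AE p in lborel. p \<in> Qset T \<longrightarrow> u (fst p) (snd p) = time_primitive \<xi> ut (fst p) (snd p)"
      using AE_eq by (simp add: time_primitive_def)
  qed (rule time_primitive_diff(2)[OF ut \<xi>])
qed

lemma inX_has_inY_representative:
  assumes "0 < T" "inX a T u ut ux uxx"
  shows "\<exists>v. inY a T v \<and> (AE p in lborel. p \<in> Qset T \<longrightarrow> u (fst p) (snd p) = v (fst p) (snd p))"
  using inX_time_primitive[OF assms] by blast

lemma inX_inY_lipschitz:
  assumes T: "0 < T" and X: "inX a T u ut ux uxx" and v: "inY a T v"
    and AE_eq: "AE p in lborel. p \<in> Qset T \<longrightarrow> u (fst p) (snd p) = v (fst p) (snd p)"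
    and ts: "t \<in> {0..T}" "s \<in> {0..T}"
  shows "nL2w a (\<lambda>x. v t x - v s x) \<le> \<bar>t - s\<bar> * normX2 a T u ut ux uxx"
proof -
  obtain \<xi> where P: "inY a T (time_primitive \<xi> ut)"
    and AE_P: "AE p in lborel. p \<in> Qset T \<longrightarrow> u (fst p) (snd p) = time_primitive \<xi> ut (fst p) (snd p)"
    and lip: "\<And>t s. t \<in> {0..T} \<Longrightarrow> s \<in> {0..T} \<Longrightarrow>
      nL2w a (\<lambda>x. time_primitive \<xi> ut t x - time_primitive \<xi> ut s x)
        \<le> \<bar>t - s\<bar> * (LINT p:Qset T|lborel. (case p of (t, x) \<Rightarrow> (ut t x)^2 / a x))"
    using inX_time_primitive[OF T X] by blast
  define P where "P = time_primitive \<xi> ut"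
  have "AE p in lborel. p \<in> Qset T \<longrightarrow> v (fst p) (snd p) = P (fst p) (snd p)"
    using AE_eq AE_P by eventually_elim (simp add: P_def)
  then have zero: "AE x in lborel. x \<in> {0<..<1} \<longrightarrow> v r x - P r x = 0" if "r \<in> {0..T}" for r
    using inY_AE_eq_imp_nL2w_eq_0[OF T v P[folded P_def] _ that]
    by (intro nL2w_eq_0_imp_AE L2w_diff inY_L2w[OF v that] inY_L2w[OF P[folded P_def] that])
  have "nL2w a (\<lambda>x. v t x - v s x) = nL2w a (\<lambda>x. P t x - P s x)"
  proof (rule nL2w_cong_AE)
    show "set_borel_measurable lborel {0<..<1} (\<lambda>x. v t x - v s x)"
      using ts by (intro L2w_measurable L2w_diff inY_L2w[OF v])
    show "set_borel_measurable lborel {0<..<1} (\<lambda>x. P t x - P s x)"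
      using ts by (intro L2w_measurable L2w_diff inY_L2w[OF P[folded P_def]])
    show "AE x in lborel. x \<in> {0<..<1} \<longrightarrow> v t x - v s x = P t x - P s x"
      using zero[OF ts(1)] zero[OF ts(2)] by eventually_elim auto
  qed
  also have "\<dots> \<le> \<bar>t - s\<bar> * (LINT p:Qset T|lborel. (case p of (t, x) \<Rightarrow> (ut t x)^2 / a x))"
    using lip[OF ts] by (simp add: P_def)
  also have "\<dots> \<le> \<bar>t - s\<bar> * normX2 a T u ut ux uxx"
    using normX2_ge(1)[OF X] by (simp add: mult_left_mono)
  finally show ?thesis .
qed

lemma inX_good_time:
  assumes X: "inX a T u ut ux uxx"
    and AE_eq: "AE p in lborel. p \<in> Qset T \<longrightarrow> u (fst p) (snd p) = v (fst p) (snd p)"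
    and C: "normX2 a T u ut ux uxx \<le> C" and I: "0 \<le> lo" "lo < hi" "hi \<le> T"
  obtains s where "s \<in> {lo<..<hi}" and "H1w a (u s) (ux s)"
    and "AE x in lborel. x \<in> {0<..<1} \<longrightarrow> u s x = v s x"
    and "(LINT x:{0<..<1}|lborel. (ux s x)^2) \<le> (C + 1) / (hi - lo)"
proof -
  have ux_int: "set_integrable lborel (Qset T) (\<lambda>(t, x). (ux t x)^2)"
    and AE_H1: "AE s in lborel. s \<in> {0<..<T} \<longrightarrow> H1w a (u s) (ux s)"
    using X by (auto simp: inX_def H2w_def elim: AE_mp)
  define h where "h p = indicator (Qset T) p * (case_prod ux p)^2" for p
  have h_int: "integrable lborel h"
    using ux_int by (simp add: h_def[abs_def] set_integrable_def case_prod_beta')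
  have h_nonneg: "0 \<le> h p" for p
    by (simp add: h_def)
  have h_le: "integral\<^sup>L lborel h \<le> C"
    using normX2_ge(2)[OF X] C by (simp add: h_def[abs_def] set_lebesgue_integral_def case_prod_beta')
  have C_nonneg: "0 \<le> C"
    using normX2_nonneg C by (rule order_trans)
  define E where "E s = (\<integral>\<^sup>+x. ennreal (h (s, x)) \<partial>lborel)" for s
  have "(\<integral>\<^sup>+s\<in>{lo<..<hi}. E s \<partial>lborel) \<le> (\<integral>\<^sup>+s. E s \<partial>lborel)"
    by (intro nn_integral_mono) (simp add: indicator_def)
  also have "\<dots> = (\<integral>\<^sup>+p. ennreal (h p) \<partial>lborel)"
    using lborel.nn_integral_fst[of "\<lambda>p. ennreal (h p)" lborel] borel_measurable_integrable[OF h_int]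
    by (simp add: E_def lborel_prod)
  also have "\<dots> = ennreal (integral\<^sup>L lborel h)"
    by (rule nn_integral_eq_integral[OF h_int]) (simp add: h_nonneg)
  also have "\<dots> \<le> ennreal C"
    using h_le by (rule ennreal_leI)
  finally have E_le: "(\<integral>\<^sup>+s\<in>{lo<..<hi}. E s \<partial>lborel) \<le> ennreal C" .
  from AE_Qset_slices[OF AE_eq] have "AE s in lborel. s \<in> {lo<..<hi} \<longrightarrow>
      H1w a (u s) (ux s) \<and> (AE x in lborel. (s, x) \<in> Qset T \<longrightarrow> u s x = v s x)"
    using AE_H1 by eventually_elim (use I in auto)
  then obtain s where s: "s \<in> {lo<..<hi}"
    and H1: "H1w a (u s) (ux s)" and uv: "AE x in lborel. (s, x) \<in> Qset T \<longrightarrow> u s x = v s x"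
    and E_s: "E s \<le> ennreal ((C + 1) / (hi - lo))"
    by (rule ex_below_average[OF _ _ _ _ E_le C_nonneg]) (use I in auto)
  have s_T: "s \<in> {0<..<T}"
    using s I by auto
  have "set_integrable lborel {0<..<1} (\<lambda>x. (ux s x)^2)"
    using H1 by (simp add: H1w_def)
  then have "E s = ennreal (LINT x:{0<..<1}|lborel. (ux s x)^2)"
    using s_T unfolding set_lebesgue_integral_def set_integrable_def
    by (subst nn_integral_eq_integral[symmetric])
       (auto simp: E_def h_def Qset_def indicator_def intro!: nn_integral_cong)
  then have "(LINT x:{0<..<1}|lborel. (ux s x)^2) \<le> (C + 1) / (hi - lo)"
    using E_s C_nonneg I by (simp add: ennreal_le_iff)
  moreover have "AE x in lborel. x \<in> {0<..<1} \<longrightarrow> u s x = v s x"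
    using uv by eventually_elim (use s_T in \<open>auto simp: Qset_def\<close>)
  ultimately show ?thesis
    using s H1 that by blast
qed

lemma inX_inY_sample:
  assumes X: "inX a T u ut ux uxx"
    and AE_eq: "AE p in lborel. p \<in> Qset T \<longrightarrow> u (fst p) (snd p) = v (fst p) (snd p)"
    and C: "normX2 a T u ut ux uxx \<le> C" and I: "0 \<le> lo" "lo < hi" "hi \<le> T"
  obtains s g where "s \<in> {lo<..<hi}" and "g 0 = 0" and "half_holder_on ((C + 1) / (hi - lo)) {0..1} g"
    and "AE x in lborel. x \<in> {0<..<1} \<longrightarrow> v s x = g x"
proof -
  obtain s where s: "s \<in> {lo<..<hi}" and H1: "H1w a (u s) (ux s)"
    and uv: "AE x in lborel. x \<in> {0<..<1} \<longrightarrow> u s x = v s x"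
    and energy: "(LINT x:{0<..<1}|lborel. (ux s x)^2) \<le> (C + 1) / (hi - lo)"
    by (rule inX_good_time[OF X AE_eq C I])
  have ux_s: "set_borel_measurable lborel {0<..<1} (ux s)"
    "set_integrable lborel {0<..<1} (\<lambda>x. (ux s x)^2)"
    and u_s: "AE x in lborel. x \<in> {0<..<1} \<longrightarrow> u s x = (LINT y:{0<..<x}|lborel. ux s y)"
    using H1 by (simp_all add: H1w_def)
  define g where "g y = (LINT z:{0<..<y}|lborel. ux s z)" for y
  show ?thesis
  proof (rule that[of s g])
    show "g 0 = 0"
      by (simp add: g_def set_lebesgue_integral_def)
    show "half_holder_on ((C + 1) / (hi - lo)) {0..1} g"
      unfolding g_def by (rule half_holder_on_mono[OF half_holder_on_primitive[OF ux_s] energy])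
    show "AE x in lborel. x \<in> {0<..<1} \<longrightarrow> v s x = g x"
      using uv u_s by eventually_elim (auto simp: g_def)
  qed (rule s)
qed

lemma nL2w_sample_le:
  assumes v: "inY a T v" and C: "0 \<le> C"
    and lip: "\<And>t s. t \<in> {0..T} \<Longrightarrow> s \<in> {0..T} \<Longrightarrow> nL2w a (\<lambda>x. v t x - v s x) \<le> \<bar>t - s\<bar> * C"
    and g: "set_borel_measurable lborel {0<..<1} g"
    and sample: "AE x in lborel. x \<in> {0<..<1} \<longrightarrow> v s x = g x"
    and ts: "t \<in> {lo..hi}" "s \<in> {lo..hi}" "{lo..hi} \<subseteq> {0..T}"
  shows "L2w a g" and "nL2w a (\<lambda>x. v t x - g x) \<le> (hi - lo) * C"
proof -
  have t: "t \<in> {0..T}" and s: "s \<in> {0..T}"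
    using ts by auto
  show g_L2w: "L2w a g"
    by (rule L2w_cong_AE[OF inY_L2w[OF v s] g sample])
  have "nL2w a (\<lambda>x. v t x - g x) = nL2w a (\<lambda>x. v t x - v s x)"
    using sample inY_L2w[OF v t] inY_L2w[OF v s] g_L2w
    by (intro nL2w_cong_AE L2w_measurable L2w_diff) (auto elim: AE_mp)
  also have "\<dots> \<le> \<bar>t - s\<bar> * C"
    by (rule lip[OF t s])
  also have "\<dots> \<le> (hi - lo) * C"
    using ts C by (intro mult_right_mono) auto
  finally show "nL2w a (\<lambda>x. v t x - g x) \<le> (hi - lo) * C" .
qed

lemma nL2w_le_samples:
  assumes v: "inY a T v" "inY a T w" and C: "0 \<le> C"
    and lip: "\<And>t s. t \<in> {0..T} \<Longrightarrow> s \<in> {0..T} \<Longrightarrow> nL2w a (\<lambda>x. v t x - v s x) \<le> \<bar>t - s\<bar> * C"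
      "\<And>t s. t \<in> {0..T} \<Longrightarrow> s \<in> {0..T} \<Longrightarrow> nL2w a (\<lambda>x. w t x - w s x) \<le> \<bar>t - s\<bar> * C"
    and g: "set_borel_measurable lborel {0<..<1} g" "AE x in lborel. x \<in> {0<..<1} \<longrightarrow> v s x = g x"
    and h: "set_borel_measurable lborel {0<..<1} h" "AE x in lborel. x \<in> {0<..<1} \<longrightarrow> w s' x = h x"
    and t: "t \<in> {lo..hi}" "s \<in> {lo..hi}" "s' \<in> {lo..hi}" "{lo..hi} \<subseteq> {0..T}"
  shows "nL2w a (\<lambda>x. v t x - w t x) \<le> 6 * ((hi - lo) * C) + 4 * nL2w a (\<lambda>x. g x - h x)"
proof -
  note sample_g = nL2w_sample_le[OF v(1) C lip(1) g t(1,2,4)]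
  note sample_h = nL2w_sample_le[OF v(2) C lip(2) h t(1,3,4)]
  have "t \<in> {0..T}"
    using t by auto
  then have "nL2w a (\<lambda>x. v t x - w t x) \<le> 2 * nL2w a (\<lambda>x. v t x - g x)
      + 4 * nL2w a (\<lambda>x. g x - h x) + 4 * nL2w a (\<lambda>x. h x - w t x)"
    using sample_g(1) sample_h(1) by (intro nL2w_triangle3 inY_L2w[OF v(1)] inY_L2w[OF v(2)])
  then show ?thesis
    using sample_g(2) sample_h(2) nL2w_commute[of a h "w t"] by linarith
qed

end

section \<open>Compactness\<close>

locale weight_above_power = weight +
  fixes c \<alpha> :: real
  assumes c_pos: "0 < c" and exponent_less_2: "\<alpha> < 2"
    and above_power: "\<And>x. 0 < x \<Longrightarrow> x \<le> 1 \<Longrightarrow> c * x powr \<alpha> \<le> a x"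
begin

lemma nL2w_small_if_square_small:
  assumes \<beta>: "0 \<le> \<beta>" and \<epsilon>: "0 < \<epsilon>"
  obtains S where "0 < S"
    and "\<And>D. (\<And>x. x \<in> {0<..<1} \<Longrightarrow> (D x)^2 \<le> \<beta> * x) \<Longrightarrow> (\<And>x. x \<in> {0<..<1} \<Longrightarrow> (D x)^2 \<le> S)
      \<Longrightarrow> nL2w a D < \<epsilon>"
proof -
  define \<phi> where "\<phi> n x = min (\<beta> * x) (inverse (real (Suc n))) / (c * x powr \<alpha>)" for n x
  note lim = min_power_integral_tendsto_0[OF \<beta> c_pos exponent_less_2, folded \<phi>_def]
  obtain n where n: "(LINT x:{0<..<1}|lborel. \<phi> n x) < \<epsilon>"
    using order_tendstoD(2)[OF lim(2) \<epsilon>] by (auto simp: eventually_sequentially)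
  show ?thesis
  proof (rule that[of "inverse (real (Suc n))"])
    fix D
    assume D_near_0: "\<And>x. x \<in> {0<..<1} \<Longrightarrow> (D x)^2 \<le> \<beta> * x"
      and D_small: "\<And>x. x \<in> {0<..<1} \<Longrightarrow> (D x)^2 \<le> inverse (real (Suc n))"
    have pointwise: "(D x)^2 / a x \<le> \<phi> n x" if x: "x \<in> {0<..<1}" for x
    proof -
      have "0 < c * x powr \<alpha>" "c * x powr \<alpha> \<le> a x"
        using x c_pos above_power[of x] by auto
      then show ?thesis
        using D_near_0[OF x] D_small[OF x] x \<beta> unfolding \<phi>_def by (intro frac_le) auto
    qed
    have "nL2w a D \<le> (LINT x:{0<..<1}|lborel. \<phi> n x)"
      unfolding nL2w_def set_lebesgue_integral_def
    proof (rule integral_mono_AE')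
      show "integrable lborel (\<lambda>x. indicator {0<..<1} x *\<^sub>R \<phi> n x)"
        using lim(1)[of n] by (simp add: set_integrable_def)
      show "AE x in lborel. indicator {0<..<1} x *\<^sub>R ((D x)^2 / a x) \<le> indicator {0<..<1} x *\<^sub>R \<phi> n x"
        using pointwise by (intro AE_I2) (simp add: indicator_def)
      show "AE x in lborel. 0 \<le> indicator {0<..<1} x *\<^sub>R \<phi> n x"
        using \<beta> c_pos by (intro AE_I2) (auto simp: \<phi>_def indicator_def)
    qed
    with n show "nL2w a D < \<epsilon>"
      by simp
  qed simp
qed

lemma nL2w_small_if_grid_small:
  assumes \<beta>: "0 \<le> \<beta>" and \<epsilon>: "0 < \<epsilon>"
  obtains J \<theta> where "0 < J" and "0 < \<theta>"
    and "\<And>D. D 0 = 0 \<Longrightarrow> half_holder_on \<beta> {0..1} D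
      \<Longrightarrow> (\<And>k. k \<le> J \<Longrightarrow> \<bar>D (real k / real J)\<bar> \<le> \<theta>) \<Longrightarrow> nL2w a D < \<epsilon>"
proof -
  obtain S where S: "0 < S" and small: "\<And>D. (\<And>x. x \<in> {0<..<1} \<Longrightarrow> (D x)^2 \<le> \<beta> * x)
      \<Longrightarrow> (\<And>x. x \<in> {0<..<1} \<Longrightarrow> (D x)^2 \<le> S) \<Longrightarrow> nL2w a D < \<epsilon>"
    using nL2w_small_if_square_small[OF \<beta> \<epsilon>] by blast
  obtain J :: nat where J: "4 * \<beta> / S < real J"
    using reals_Archimedean2 by blast
  moreover have "0 \<le> 4 * \<beta> / S"
    using \<beta> S by simp
  ultimately have J_pos: "0 < J"
    by simp
  have J_le: "2 * \<beta> / real J \<le> S / 2"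
    using J J_pos S by (simp add: field_simps)
  define \<theta> where "\<theta> = sqrt (S / 4)"
  have \<theta>: "0 < \<theta>" "2 * \<theta>^2 = S / 2"
    using S by (simp_all add: \<theta>_def)
  show ?thesis
  proof (rule that[OF J_pos \<theta>(1)])
    fix D
    assume D_0: "D 0 = 0" and holder: "half_holder_on \<beta> {0..1} D"
      and grid: "\<And>k. k \<le> J \<Longrightarrow> \<bar>D (real k / real J)\<bar> \<le> \<theta>"
    show "nL2w a D < \<epsilon>"
    proof (rule small)
      fix x :: real assume x: "x \<in> {0<..<1}"
      show "(D x)^2 \<le> \<beta> * x"
        using x by (intro half_holder_on_square_le[OF holder _ D_0]) auto
      have "(D x)^2 \<le> 2 * \<theta>^2 + 2 * \<beta> / real J"
        using x by (intro half_holder_on_grid_square_le[OF holder \<beta> J_pos grid]) auto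
      then show "(D x)^2 \<le> S"
        using \<theta>(2) J_le by linarith
    qed
  qed
qed

lemma uniformly_cauchy_if_grid_convergent:
  fixes v :: "nat \<Rightarrow> real \<Rightarrow> real \<Rightarrow> real" and G :: "nat \<Rightarrow> nat \<times> nat \<Rightarrow> real \<Rightarrow> real"
    and \<beta> :: "nat \<Rightarrow> real"
  assumes T: "0 < T" and v: "\<And>n. inY a T (v n)" and C: "0 \<le> C"
    and lip: "\<And>n t s. t \<in> {0..T} \<Longrightarrow> s \<in> {0..T} \<Longrightarrow> nL2w a (\<lambda>x. v n t x - v n s x) \<le> \<bar>t - s\<bar> * C"
    and \<beta>: "\<And>m. 0 \<le> \<beta> m"
    and G: "\<And>n m i. G n (m, i) 0 = 0" "\<And>n m i. half_holder_on (\<beta> m) {0..1} (G n (m, i))"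
    and sample: "\<And>n m i. 0 < m \<Longrightarrow> i < m \<Longrightarrow> \<exists>s \<in> {real i * T / real m .. (real i + 1) * T / real m}.
      AE x in lborel. x \<in> {0<..<1} \<longrightarrow> v n s x = G n (m, i) x"
    and conv: "\<And>m i k J. k \<le> J \<Longrightarrow> convergent (\<lambda>n. G n (m, i) (real k / real J))"
  shows "uniformly_cauchy_L2w a T v"
  unfolding uniformly_cauchy_L2w_def
proof (intro allI impI)
  fix \<epsilon> :: real assume \<epsilon>: "0 < \<epsilon>"
  (* Half of the budget bounds the time variation within a subinterval, the other half the samples. *)
  obtain m :: nat where m: "12 * C * T / \<epsilon> < real m"
    using reals_Archimedean2 by blast
  moreover have "0 \<le> 12 * C * T / \<epsilon>"
    using C T \<epsilon> by simp
  ultimately have m_pos: "0 < m"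
    by simp
  have m_le: "6 * (T / real m * C) < \<epsilon> / 2"
    using m m_pos \<epsilon> by (simp add: field_simps)
  obtain J \<theta> where "0 < J" and \<theta>: "0 < \<theta>"
    and grid_small: "\<And>D. D 0 = 0 \<Longrightarrow> half_holder_on (4 * \<beta> m) {0..1} D
      \<Longrightarrow> (\<And>k. k \<le> J \<Longrightarrow> \<bar>D (real k / real J)\<bar> \<le> \<theta>) \<Longrightarrow> nL2w a D < \<epsilon> / 8"
    using nL2w_small_if_grid_small[of "4 * \<beta> m" "\<epsilon> / 8"] \<beta>[of m] \<epsilon> by auto
  have "convergent (\<lambda>n. G n (m, fst ik) (real (snd ik) / real J))" if "ik \<in> {..<m} \<times> {..J}" for ik
    using conv that by auto
  then obtain N where N: "\<And>n p ik. N \<le> n \<Longrightarrow> N \<le> p \<Longrightarrow> ik \<in> {..<m} \<times> {..J} \<Longrightarrow>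
      \<bar>G n (m, fst ik) (real (snd ik) / real J) - G p (m, fst ik) (real (snd ik) / real J)\<bar> < \<theta>"
    using convergent_finite_family_eventually_close[where X = "\<lambda>n ik. G n (m, fst ik) (real (snd ik) / real J)"
        and A = "{..<m} \<times> {..J}", OF _ _ \<theta>]
    by blast
  show "\<exists>N. \<forall>n\<ge>N. \<forall>p\<ge>N. \<forall>t\<in>{0..T}. nL2w a (\<lambda>x. v n t x - v p t x) < \<epsilon>"
  proof (intro exI[of _ N] allI impI ballI)
    fix n p t assume n: "N \<le> n" and p: "N \<le> p" and t: "t \<in> {0..T}"
    obtain i where i: "i < m" "real i * T / real m \<le> t" "t \<le> (real i + 1) * T / real m"
      using ex_subinterval_index[OF m_pos T t] by blast
    define lo hi where "lo = real i * T / real m" and "hi = (real i + 1) * T / real m"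
    have interval: "{lo..hi} \<subseteq> {0..T}" "hi - lo = T / real m"
      using subinterval_bounds[OF i(1) T] by (auto simp: lo_def hi_def)
    obtain s s' where s: "s \<in> {lo..hi}" "AE x in lborel. x \<in> {0<..<1} \<longrightarrow> v n s x = G n (m, i) x"
      and s': "s' \<in> {lo..hi}" "AE x in lborel. x \<in> {0<..<1} \<longrightarrow> v p s' x = G p (m, i) x"
      using sample[OF m_pos i(1), of n] sample[OF m_pos i(1), of p] by (auto simp: lo_def hi_def)
    have "nL2w a (\<lambda>x. G n (m, i) x - G p (m, i) x) < \<epsilon> / 8"
    proof (rule grid_small)
      show "G n (m, i) 0 - G p (m, i) 0 = 0"
        using G(1) by simp
      show "half_holder_on (4 * \<beta> m) {0..1} (\<lambda>x. G n (m, i) x - G p (m, i) x)"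
        using G(2) G(2) by (rule half_holder_on_diff)
      show "\<bar>G n (m, i) (real k / real J) - G p (m, i) (real k / real J)\<bar> \<le> \<theta>" if "k \<le> J" for k
        using N[OF n p, of "(i, k)"] i(1) that by simp
    qed
    moreover have "nL2w a (\<lambda>x. v n t x - v p t x)
        \<le> 6 * ((hi - lo) * C) + 4 * nL2w a (\<lambda>x. G n (m, i) x - G p (m, i) x)"
      using i by (intro nL2w_le_samples[OF v v C lip lip half_holder_on_set_borel_measurable[OF G(2)] s(2)
          half_holder_on_set_borel_measurable[OF G(2)] s'(2) _ s(1) s'(1) interval(1)]) (auto simp: lo_def hi_def)
    ultimately show "nL2w a (\<lambda>x. v n t x - v p t x) < \<epsilon>"
      using m_le interval(2) by simp
  qed
qed

lemma uniformly_cauchy_subseq: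
  fixes v :: "nat \<Rightarrow> real \<Rightarrow> real \<Rightarrow> real" and \<beta> :: "nat \<Rightarrow> real"
  assumes T: "0 < T" and v: "\<And>n. inY a T (v n)" and C: "0 \<le> C"
    and lip: "\<And>n t s. t \<in> {0..T} \<Longrightarrow> s \<in> {0..T} \<Longrightarrow> nL2w a (\<lambda>x. v n t x - v n s x) \<le> \<bar>t - s\<bar> * C"
    and \<beta>: "\<And>m. 0 \<le> \<beta> m"
    and samples: "\<And>n m i. 0 < m \<Longrightarrow> i < m \<Longrightarrow> \<exists>s g. s \<in> {real i * T / real m .. (real i + 1) * T / real m}
      \<and> g 0 = 0 \<and> half_holder_on (\<beta> m) {0..1} g \<and> (AE x in lborel. x \<in> {0<..<1} \<longrightarrow> v n s x = g x)"
  obtains r where "strict_mono r" and "uniformly_cauchy_L2w a T (\<lambda>n. v (r n))"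
proof -
  define sample where "sample n m i g \<longleftrightarrow> g 0 = 0 \<and> half_holder_on (\<beta> m) {0..1} g
    \<and> (\<exists>s \<in> {real i * T / real m .. (real i + 1) * T / real m}.
        AE x in lborel. x \<in> {0<..<1} \<longrightarrow> v n s x = g x)" for n m i g
  define G where "G n mi = (if 0 < fst mi \<and> snd mi < fst mi then SOME g. sample n (fst mi) (snd mi) g
    else (\<lambda>_. 0))" for n and mi :: "nat \<times> nat"
  have G_sample: "sample n m i (G n (m, i))" if mi: "0 < m" "i < m" for n m i
  proof -
    obtain s g where "s \<in> {real i * T / real m .. (real i + 1) * T / real m}" "g 0 = 0"
      "half_holder_on (\<beta> m) {0..1} g" "AE x in lborel. x \<in> {0<..<1} \<longrightarrow> v n s x = g x"
      using samples[OF mi, of n] by blast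
    then have "sample n m i g"
      unfolding sample_def by blast
    then show ?thesis
      using mi unfolding G_def by (simp add: someI[where P = "sample n m i"])
  qed
  have G: "G n (m, i) 0 = 0 \<and> half_holder_on (\<beta> m) {0..1} (G n (m, i))" for n m i
  proof (cases "0 < m \<and> i < m")
    case True
    then show ?thesis
      using G_sample[of m i n] unfolding sample_def by blast
  next
    case False
    then show ?thesis
      using \<beta>[of m] by (auto simp: G_def half_holder_on_def)
  qed
  have G': "G n mi 0 = 0" "half_holder_on (\<beta> (fst mi)) {0..1} (G n mi)" for n mi
    using G[of n "fst mi" "snd mi"] by simp_all
  obtain r where r: "strict_mono r"
    and conv: "\<And>mi k J. k \<le> J \<Longrightarrow> convergent (\<lambda>n. G (r n) mi (real k / real J))"
    using half_holder_grid_convergent_subseq[of G "\<lambda>mi. \<beta> (fst mi)", OF G'] by blast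
  have "uniformly_cauchy_L2w a T (\<lambda>n. v (r n))"
  proof (rule uniformly_cauchy_if_grid_convergent[OF T v C lip \<beta>, where G = "\<lambda>n. G (r n)"])
    show "G (r n) (m, i) 0 = 0" "half_holder_on (\<beta> m) {0..1} (G (r n) (m, i))" for n m i
      using G by blast+
    show "\<exists>s \<in> {real i * T / real m .. (real i + 1) * T / real m}.
        AE x in lborel. x \<in> {0<..<1} \<longrightarrow> v (r n) s x = G (r n) (m, i) x" if "0 < m" "i < m" for n m i
      using G_sample[OF that, of "r n"] by (simp add: sample_def)
    show "convergent (\<lambda>n. G (r n) (m, i) (real k / real J))" if "k \<le> J" for m i k J
      using conv[OF that] by blast
  qed
  with r show ?thesis
    by (rule that)
qed

lemma bounded_inX_convergent_subseq:
  fixes u ut ux uxx v :: "nat \<Rightarrow> real \<Rightarrow> real \<Rightarrow> real"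
  assumes T: "0 < T" and X: "\<And>n. inX a T (u n) (ut n) (ux n) (uxx n)"
    and bounded: "\<And>n. normX2 a T (u n) (ut n) (ux n) (uxx n) \<le> C" and v: "\<And>n. inY a T (v n)"
    and u_v: "\<And>n. AE p in lborel. p \<in> Qset T \<longrightarrow> u n (fst p) (snd p) = v n (fst p) (snd p)"
  shows "\<exists>r w. strict_mono r \<and> inY a T w
    \<and> (\<forall>\<epsilon>>0. eventually (\<lambda>n. \<forall>t\<in>{0..T}. nL2w a (\<lambda>x. v (r n) t x - w t x) < \<epsilon>) sequentially)
    \<and> ((\<lambda>n. LINT p:Qset T|lborel. (case p of (t, x) \<Rightarrow> (v (r n) t x - w t x)^2)) \<longlonglongrightarrow> 0)"
proof -
  have C: "0 \<le> C"
    using normX2_nonneg bounded order_trans by blast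
  have lip: "nL2w a (\<lambda>x. v n t x - v n s x) \<le> \<bar>t - s\<bar> * C" if "t \<in> {0..T}" "s \<in> {0..T}" for n t s
    using inX_inY_lipschitz[OF T X v u_v that] bounded[of n] by (meson abs_ge_zero mult_left_mono order_trans)
  have samples: "\<exists>s g. s \<in> {real i * T / real m .. (real i + 1) * T / real m} \<and> g 0 = 0
      \<and> half_holder_on ((C + 1) * real m / T) {0..1} g \<and> (AE x in lborel. x \<in> {0<..<1} \<longrightarrow> v n s x = g x)"
    if "0 < m" "i < m" for n m i
  proof -
    note lo_hi = subinterval_bounds[OF that(2) T]
    obtain s g where "s \<in> {real i * T / real m<..<(real i + 1) * T / real m}" "g 0 = 0"
      "half_holder_on ((C + 1) / (T / real m)) {0..1} g" "AE x in lborel. x \<in> {0<..<1} \<longrightarrow> v n s x = g x"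
      by (rule inX_inY_sample[OF X u_v bounded lo_hi(1-3)]) (simp only: lo_hi(4))
    then show ?thesis
      by (intro exI[of _ s] exI[of _ g]) auto
  qed
  obtain r1 where r1: "strict_mono r1" and cauchy: "uniformly_cauchy_L2w a T (\<lambda>n. v (r1 n))"
    using uniformly_cauchy_subseq[where v = v and \<beta> = "\<lambda>m. (C + 1) * real m / T", OF T v C lip _ samples]
      C T by auto
  obtain r2 w where "strict_mono r2" "inY a T w"
    "\<forall>\<epsilon>>0. eventually (\<lambda>n. \<forall>t\<in>{0..T}. nL2w a (\<lambda>x. v (r1 (r2 n)) t x - w t x) < \<epsilon>) sequentially"
    "(\<lambda>n. LINT p:Qset T|lborel. (case p of (t, x) \<Rightarrow> (v (r1 (r2 n)) t x - w t x)^2)) \<longlonglongrightarrow> 0"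
    by (rule uniformly_cauchy_L2w_imp_convergent[OF T v cauchy])
  with r1 show ?thesis
    by (intro exI[of _ "r1 \<circ> r2"] exI[of _ w]) (simp add: strict_mono_o)
qed

end

lemma power_lower_bound_if_mono_on:
  fixes a :: "real \<Rightarrow> real"
  assumes mono: "mono_on {0<..1} (\<lambda>x. x powr \<alpha> / a x)" and pos: "\<forall>x\<in>{0<..1}. a x > 0"
    and x: "0 < x" "x \<le> 1"
  shows "a 1 * x powr \<alpha> \<le> a x"
proof -
  have "x powr \<alpha> / a x \<le> 1 powr \<alpha> / a 1"
    using mono_onD[OF mono, of x 1] x by simp
  then show ?thesis
    using pos x by (simp add: field_simps)
qed

theorem mainTheorem13:
  fixes a :: "real \<Rightarrow> real" and \<alpha> T :: real
  assumes "continuous_on {0..1} a" and "a 0 = 0" and "\<forall>x\<in>{0<..1}. a x > 0"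
    and "0 < \<alpha>" and "\<alpha> < 2"
    and "mono_on {0<..1} (\<lambda>x. x powr \<alpha> / a x)"
    and "T > 0"
  shows "(\<forall>u ut ux uxx. inX a T u ut ux uxx \<longrightarrow>
            (\<exists>v. inY a T v \<and> (AE p in lborel. p \<in> Qset T \<longrightarrow>
                    u (fst p) (snd p) = v (fst p) (snd p))))
       \<and> (\<forall>(u :: nat \<Rightarrow> real \<Rightarrow> real \<Rightarrow> real) ut ux uxx v C.
            (\<forall>n. inX a T (u n) (ut n) (ux n) (uxx n) \<and> normX2 a T (u n) (ut n) (ux n) (uxx n) \<le> C
                 \<and> inY a T (v n)
                 \<and> (AE p in lborel. p \<in> Qset T \<longrightarrow> u n (fst p) (snd p) = v n (fst p) (snd p)))
            \<longrightarrow> (\<exists>r w. strict_mono r \<and> inY a T w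
                  \<and> (\<forall>\<epsilon>>0. eventually (\<lambda>n. \<forall>t\<in>{0..T}. nL2w a (\<lambda>x. v (r n) t x - w t x) < \<epsilon>) sequentially)
                  \<and> ((\<lambda>n. LINT p:Qset T|lborel. (case p of (t,x) \<Rightarrow> (v (r n) t x - w t x)^2)) \<longlonglongrightarrow> 0)))"
proof -
  interpret weight_above_power a "a 1" \<alpha>
    using assms(1,3,5) power_lower_bound_if_mono_on[OF assms(6,3)] by unfold_locales auto
  show ?thesis
  proof (intro conjI allI impI)
    fix u ut ux uxx assume "inX a T u ut ux uxx"
    then show "\<exists>v. inY a T v \<and> (AE p in lborel. p \<in> Qset T \<longrightarrow> u (fst p) (snd p) = v (fst p) (snd p))"
      using inX_has_inY_representative \<open>T > 0\<close> by blast
  next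
    fix u :: "nat \<Rightarrow> real \<Rightarrow> real \<Rightarrow> real" and ut ux uxx v and C :: real
    assume "\<forall>n. inX a T (u n) (ut n) (ux n) (uxx n) \<and> normX2 a T (u n) (ut n) (ux n) (uxx n) \<le> C
      \<and> inY a T (v n) \<and> (AE p in lborel. p \<in> Qset T \<longrightarrow> u n (fst p) (snd p) = v n (fst p) (snd p))"
    then show "\<exists>r w. strict_mono r \<and> inY a T w
        \<and> (\<forall>\<epsilon>>0. eventually (\<lambda>n. \<forall>t\<in>{0..T}. nL2w a (\<lambda>x. v (r n) t x - w t x) < \<epsilon>) sequentially)
        \<and> ((\<lambda>n. LINT p:Qset T|lborel. (case p of (t,x) \<Rightarrow> (v (r n) t x - w t x)^2)) \<longlonglongrightarrow> 0)"
      using bounded_inX_convergent_subseq[OF \<open>T > 0\<close>] by blast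
  qed
qed

end
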